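(* Let $\beta$ be generic and $x_k(t)$ smooth with $\dot x_k^2\neq1$, $\wp'(x_k)\ne0$; put $u_k=\wp(x_k)$. Then $$\frac{\dot x_k-1}{\dot x_k+1}=\frac{F(x_k,x_{k+1};\beta)}{F(x_k,x_{k-1};\beta)}\ \ \forall k\quad\iff\quad \dot u_k=\frac{2\rho(u_{k+1},u_k,u_{k-1};\beta)}{u_{k+1}-u_{k-1}}\ \ \forall k.$$
   Context: $\wp,\sigma$: Weierstrass functions (invariants $g_2,g_3$, nondegenerate). $F(x_0,x_1;\alpha)=\frac{\sigma(x_0+x_1+\alpha)\sigma(x_0-x_1+\alpha)}{\sigma(x_0+x_1-\alpha)\sigma(x_0-x_1-\alpha)}$. For $u,w\in\mathbb C$ and $v=\wp(z)$ define $$\rho(u,v,w;\beta)=\frac{(\wp(z)-\wp(\beta))^2}{\wp'(\beta)}\Big(uw-\big(\wp(z+\beta)+\wp(z-\beta)\big)\frac{u+w}{2}+\wp(z+\beta)\wp(z-\beta)\Big).$$ *)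

theory Defs
  imports "HOL-Analysis.Analysis"
begin

definition lattice :: "complex \<Rightarrow> complex \<Rightarrow> complex set" where
  "lattice w1 w2 = {of_int m * w1 + of_int n * w2 | m n. True}"

definition wp :: "complex \<Rightarrow> complex \<Rightarrow> complex \<Rightarrow> complex" where
  "wp w1 w2 z = 1 / z^2 + infsum (\<lambda>\<omega>. 1 / (z - \<omega>)^2 - 1 / \<omega>^2) (lattice w1 w2 - {0})"

definition wsigma :: "complex \<Rightarrow> complex \<Rightarrow> complex \<Rightarrow> complex" where
  "wsigma w1 w2 z = z * Lim (finite_subsets_at_top (lattice w1 w2 - {0}))
     (\<lambda>S. \<Prod>\<omega>\<in>S. (1 - z / \<omega>) * exp (z / \<omega> + z^2 / (2 * \<omega>^2)))"

definition Fsig :: "complex \<Rightarrow> complex \<Rightarrow> complex \<Rightarrow> complex \<Rightarrow> complex \<Rightarrow> complex" where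
  "Fsig w1 w2 x0 x1 \<alpha> =
     (wsigma w1 w2 (x0 + x1 + \<alpha>) * wsigma w1 w2 (x0 - x1 + \<alpha>)) /
     (wsigma w1 w2 (x0 + x1 - \<alpha>) * wsigma w1 w2 (x0 - x1 - \<alpha>))"

text \<open>rho(u, v, w; beta) with v = wp(z); the argument z is the chosen preimage
  (the expression only depends on wp(z)).\<close>
definition rho :: "complex \<Rightarrow> complex \<Rightarrow> complex \<Rightarrow> complex \<Rightarrow> complex \<Rightarrow> complex \<Rightarrow> complex" where
  "rho w1 w2 u z w \<beta> =
     (wp w1 w2 z - wp w1 w2 \<beta>)^2 / deriv (wp w1 w2) \<beta> *
     (u * w - (wp w1 w2 (z + \<beta>) + wp w1 w2 (z - \<beta>)) * (u + w) / 2
        + wp w1 w2 (z + \<beta>) * wp w1 w2 (z - \<beta>))"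

definition tdot :: "(real \<Rightarrow> complex) \<Rightarrow> real \<Rightarrow> complex" where
  "tdot f t = vector_derivative f (at t)"

definition smooth_on :: "real set \<Rightarrow> (real \<Rightarrow> complex) \<Rightarrow> bool" where
  "smooth_on T f \<longleftrightarrow> (\<forall>n. \<forall>t\<in>T. ((\<lambda>g. tdot g) ^^ n) f differentiable (at t))"

text \<open>Genericity of beta: beta avoids the exceptional values at which some quantity in
  the statement is undefined (a pole of wp or of wp', a zero of wp'(beta), a zero of
  some sigma-factor in F).\<close>
definition generic_beta :: "complex \<Rightarrow> complex \<Rightarrow> (int \<Rightarrow> real \<Rightarrow> complex) \<Rightarrow> real set \<Rightarrow> complex \<Rightarrow> bool" where
  "generic_beta w1 w2 x T \<beta> \<longleftrightarrow>
     \<beta> \<notin> lattice w1 w2 \<and> deriv (wp w1 w2) \<beta> \<noteq> 0 \<and>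
     (\<forall>k. \<forall>t\<in>T. x k t + \<beta> \<notin> lattice w1 w2 \<and> x k t - \<beta> \<notin> lattice w1 w2) \<and>
     (\<forall>k. \<forall>t\<in>T.
        x k t + x (k + 1) t + \<beta> \<notin> lattice w1 w2 \<and>
        x k t + x (k + 1) t - \<beta> \<notin> lattice w1 w2 \<and>
        x k t - x (k + 1) t + \<beta> \<notin> lattice w1 w2 \<and>
        x k t - x (k + 1) t - \<beta> \<notin> lattice w1 w2)"

end

theory Submission
  imports Defs "HOL-Complex_Analysis.Complex_Analysis"
begin


lemma has_field_derivative_infsum:
  fixes f f' :: "'i \<Rightarrow> complex \<Rightarrow> complex" and M :: "'i \<Rightarrow> real"
  assumes M: "M summable_on I" and r: "0 < r"
    and f': "\<And>i w. i \<in> I \<Longrightarrow> w \<in> cball z r \<Longrightarrow> (f i has_field_derivative f' i w) (at w)"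
    and f_le: "\<And>i w. i \<in> I \<Longrightarrow> w \<in> cball z r \<Longrightarrow> norm (f i w) \<le> M i"
    and w: "w \<in> ball z r"
  shows "((\<lambda>w. \<Sum>\<^sub>\<infinity>i\<in>I. f i w) has_field_derivative (\<Sum>\<^sub>\<infinity>i\<in>I. f' i w)) (at w)"
    and "(\<lambda>i. f' i w) summable_on I"
proof -
  have unif: "uniform_limit (cball z r) (\<lambda>S u. \<Sum>i\<in>S. f i u) (\<lambda>u. \<Sum>\<^sub>\<infinity>i\<in>I. f i u)
                (finite_subsets_at_top I)"
    by (rule Weierstrass_m_test_general[OF f_le M])
  have approx: "\<forall>\<^sub>F S in finite_subsets_at_top I. continuous_on (cball z r) (\<lambda>u. \<Sum>i\<in>S. f i u) \<and>
          (\<forall>w\<in>ball z r. ((\<lambda>u. \<Sum>i\<in>S. f i u) has_field_derivative (\<Sum>i\<in>S. f' i w)) (at w))"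
  proof (rule eventually_finite_subsets_at_top_weakI)
    fix S assume "finite S" "S \<subseteq> I"
    then have "((\<lambda>u. \<Sum>i\<in>S. f i u) has_field_derivative (\<Sum>i\<in>S. f' i w)) (at w)"
      if "w \<in> cball z r" for w
      using that by (intro DERIV_sum f') auto
    then show "continuous_on (cball z r) (\<lambda>u. \<Sum>i\<in>S. f i u) \<and>
          (\<forall>w\<in>ball z r. ((\<lambda>u. \<Sum>i\<in>S. f i u) has_field_derivative (\<Sum>i\<in>S. f' i w)) (at w))"
      by (auto intro!: continuous_at_imp_continuous_on DERIV_continuous)
  qed
  obtain g' where "\<And>w. w \<in> ball z r \<Longrightarrow>
      ((\<lambda>u. \<Sum>\<^sub>\<infinity>i\<in>I. f i u) has_field_derivative g' w) (at w) \<and>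
      ((\<lambda>S. \<Sum>i\<in>S. f' i w) \<longlongrightarrow> g' w) (finite_subsets_at_top I)"
    using has_complex_derivative_uniform_limit[OF approx unif finite_subsets_at_top_neq_bot r] by blast
  note g' = this[OF w, THEN conjunct1] this[OF w, THEN conjunct2]
  then have "((\<lambda>i. f' i w) has_sum g' w) I"
    by (simp add: has_sum_def)
  then show "(\<lambda>i. f' i w) summable_on I"
    and "((\<lambda>w. \<Sum>\<^sub>\<infinity>i\<in>I. f i w) has_field_derivative (\<Sum>\<^sub>\<infinity>i\<in>I. f' i w)) (at w)"
    using g'(1) by (auto simp: infsumI summable_on_def)
qed

lemma summable_on_int_powr:
  fixes p :: real
  assumes "p > 1"
  shows "(\<lambda>m::int. max 1 \<bar>real_of_int m\<bar> powr - p) summable_on UNIV"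
proof -
  define b where "b = (\<lambda>n::nat. max 1 (real n) powr - p)"
  have "summable (\<lambda>n::nat. real n powr - p)"
    using assms by (subst summable_real_powr_iff) simp
  moreover have "\<forall>\<^sub>F n in sequentially. real n powr - p = b n"
    using eventually_ge_at_top[of "1::nat"] by eventually_elim (auto simp: b_def max_def)
  ultimately have "summable b"
    using summable_cong by fastforce
  then have b: "b summable_on UNIV"
    by (subst summable_on_UNIV_nonneg_real_iff) (auto simp: b_def)
  have "(\<lambda>m::int. max 1 \<bar>real_of_int m\<bar> powr - p) summable_on range f"
    if "inj f" "\<And>n. \<bar>real_of_int (f n)\<bar> = real n" for f :: "nat \<Rightarrow> int"
    using b that by (subst summable_on_reindex) (auto simp: b_def o_def)
  from summable_on_union[OF this[of int] this[of "\<lambda>n. - int n"]]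
  have "(\<lambda>m::int. max 1 \<bar>real_of_int m\<bar> powr - p) summable_on (range int \<union> range (\<lambda>n. - int n))"
    by (simp add: inj_def)
  moreover have "range int \<union> range (\<lambda>n. - int n) = UNIV"
    by (auto intro!: range_eqI[of _ _ "nat \<bar>_\<bar>"] simp: image_def) presburger
  ultimately show ?thesis
    by simp
qed

lemma inverse_cube_le_powr_mult:
  fixes m n :: int
  assumes "m \<noteq> 0 \<or> n \<noteq> 0"
  shows "1 / (\<bar>real_of_int m\<bar> + \<bar>real_of_int n\<bar>) ^ 3
           \<le> max 1 \<bar>real_of_int m\<bar> powr - (3/2) * max 1 \<bar>real_of_int n\<bar> powr - (3/2)"
proof -
  define s where "s = \<bar>real_of_int m\<bar> + \<bar>real_of_int n\<bar>"
  have "1 \<le> \<bar>m\<bar> + \<bar>n\<bar>"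
    using assms by auto
  then have "s \<ge> 1"
    unfolding s_def by linarith
  then have "max 1 \<bar>real_of_int m\<bar> \<le> s" "max 1 \<bar>real_of_int n\<bar> \<le> s"
    by (auto simp: s_def)
  then have "max 1 \<bar>real_of_int m\<bar> * max 1 \<bar>real_of_int n\<bar> \<le> s * s"
    by (intro mult_mono) auto
  also have "\<dots> = s powr 2"
    using \<open>s \<ge> 1\<close> by (simp add: powr_numeral power2_eq_square)
  finally have le: "max 1 \<bar>real_of_int m\<bar> * max 1 \<bar>real_of_int n\<bar> \<le> s powr 2" .
  have "1 / s ^ 3 = inverse (s powr 3)"
    using \<open>s \<ge> 1\<close> by (simp add: powr_numeral divide_inverse)
  also have "\<dots> = (s powr 2) powr - (3/2)"
    by (simp add: powr_powr powr_minus)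
  also have "\<dots> \<le> (max 1 \<bar>real_of_int m\<bar> * max 1 \<bar>real_of_int n\<bar>) powr - (3/2)"
    by (rule powr_mono2') (use le in auto)
  finally show ?thesis
    by (simp add: s_def powr_mult)
qed

lemma summable_on_inverse_cube_int_pairs:
  "(\<lambda>(m, n). 1 / (\<bar>real_of_int m\<bar> + \<bar>real_of_int n\<bar>) ^ 3) summable_on (- {(0::int, 0::int)})"
proof -
  define a where "a m = max 1 \<bar>real_of_int m\<bar> powr - (3/2)" for m :: int
  have a: "a summable_on UNIV"
    unfolding a_def by (rule summable_on_int_powr) simp
  have "(\<lambda>(m, n). a m * a n) summable_on UNIV \<times> UNIV"
  proof (rule summable_on_SigmaI[where g = "\<lambda>m. a m * infsum a UNIV"])
    show "((\<lambda>n. case (m, n) of (m, n) \<Rightarrow> a m * a n) has_sum a m * infsum a UNIV) UNIV" for m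
      using has_sum_cmult_right[OF has_sum_infsum[OF a]] by simp
    show "(\<lambda>m. a m * infsum a UNIV) summable_on UNIV"
      using summable_on_cmult_left[OF a] by simp
  qed (auto simp: a_def)
  then have "(\<lambda>(m, n). a m * a n) summable_on (- {(0, 0)})"
    by (rule summable_on_subset_banach) auto
  then show ?thesis
    by (rule summable_on_comparison_test) (auto simp: a_def intro!: inverse_cube_le_powr_mult)
qed

lemma DERIV_inverse_square:
  fixes u :: "'a::{real_normed_field}"
  assumes "u \<noteq> 0"
  shows "((\<lambda>u. 1 / u ^ 2) has_field_derivative -2 / u ^ 3) (at u)"
proof -
  have "((\<lambda>u. 1 / u ^ 2) has_field_derivative (0 * u ^ 2 - 1 * (of_nat 2 * (1 * u ^ (2 - Suc 0)))) / (u ^ 2 * u ^ 2)) (at u)"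
    using assms by (intro DERIV_divide DERIV_const DERIV_power DERIV_ident) simp
  then show ?thesis
    using assms by (simp add: field_simps eval_nat_numeral)
qed

lemma norm_diff_ge_half:
  fixes z \<omega> :: complex
  assumes "cmod z \<le> R" "2 * R \<le> cmod \<omega>"
  shows "cmod \<omega> / 2 \<le> cmod (z - \<omega>)"
  using assms norm_triangle_ineq3[of \<omega> z] by (simp add: norm_minus_commute)

lemma norm_divide_le:
  assumes "cmod a \<le> A" "B \<le> cmod b" "0 < B"
  shows "cmod (a / b) \<le> A / B"
  unfolding norm_divide using assms by (intro frac_le) (auto intro: order_trans[OF norm_ge_zero])

lemma wp_term_bound:
  fixes z \<omega> :: complex
  assumes \<omega>: "\<omega> \<noteq> 0" and z: "cmod z \<le> R" and R: "2 * R \<le> cmod \<omega>"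
  shows "cmod (1 / (z - \<omega>) ^ 2 - 1 / \<omega> ^ 2) \<le> 10 * R / cmod \<omega> ^ 3"
proof -
  have far: "cmod \<omega> / 2 \<le> cmod (z - \<omega>)"
    using z R by (rule norm_diff_ge_half)
  then have "z \<noteq> \<omega>"
    using \<omega> by auto
  then have eq: "1 / (z - \<omega>) ^ 2 - 1 / \<omega> ^ 2 = z * (2 * \<omega> - z) / ((z - \<omega>) ^ 2 * \<omega> ^ 2)"
    using \<omega> by (simp add: field_simps) (simp add: power2_eq_square algebra_simps)
  have "cmod (2 * \<omega> - z) \<le> 5/2 * cmod \<omega>"
    using norm_triangle_ineq4[of "2 * \<omega>" z] z R by simp
  then have num: "cmod (z * (2 * \<omega> - z)) \<le> R * (5/2 * cmod \<omega>)"
    unfolding norm_mult using z by (intro mult_mono) (auto intro: order_trans[OF norm_ge_zero])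
  have den: "(cmod \<omega> / 2) ^ 2 * cmod \<omega> ^ 2 \<le> cmod ((z - \<omega>) ^ 2 * \<omega> ^ 2)"
    unfolding norm_mult norm_power using far by (intro mult_right_mono power_mono) auto
  have "cmod (1 / (z - \<omega>) ^ 2 - 1 / \<omega> ^ 2) \<le> R * (5/2 * cmod \<omega>) / ((cmod \<omega> / 2) ^ 2 * cmod \<omega> ^ 2)"
    unfolding eq using num den \<omega> by (intro norm_divide_le) auto
  also have "\<dots> = 10 * R / cmod \<omega> ^ 3"
    using \<omega> by (simp add: field_simps eval_nat_numeral)
  finally show ?thesis .
qed

definition zeta_term :: "complex \<Rightarrow> complex \<Rightarrow> complex" where
  "zeta_term \<omega> z = 1 / (z - \<omega>) + 1 / \<omega> + z / \<omega> ^ 2"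

lemma zeta_term_eq:
  assumes "\<omega> \<noteq> 0" "z \<noteq> \<omega>"
  shows "zeta_term \<omega> z = z ^ 2 / (\<omega> ^ 2 * (z - \<omega>))"
  using assms by (simp add: zeta_term_def field_simps) algebra

lemma zeta_term_bound:
  fixes z \<omega> :: complex
  assumes \<omega>: "\<omega> \<noteq> 0" and z: "cmod z \<le> R" and R: "2 * R \<le> cmod \<omega>"
  shows "cmod (zeta_term \<omega> z) \<le> 2 * R ^ 2 / cmod \<omega> ^ 3"
proof -
  have far: "cmod \<omega> / 2 \<le> cmod (z - \<omega>)"
    using z R by (rule norm_diff_ge_half)
  then have "z \<noteq> \<omega>"
    using \<omega> by auto
  have num: "cmod (z ^ 2) \<le> R ^ 2"
    unfolding norm_power using z by (intro power_mono) auto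
  have den: "cmod \<omega> ^ 2 * (cmod \<omega> / 2) \<le> cmod (\<omega> ^ 2 * (z - \<omega>))"
    unfolding norm_mult norm_power using far by (intro mult_left_mono) auto
  have "cmod (zeta_term \<omega> z) \<le> R ^ 2 / (cmod \<omega> ^ 2 * (cmod \<omega> / 2))"
    unfolding zeta_term_eq[OF \<omega> \<open>z \<noteq> \<omega>\<close>] using num den \<omega> by (intro norm_divide_le) auto
  also have "\<dots> = 2 * R ^ 2 / cmod \<omega> ^ 3"
    using \<omega> by (simp add: field_simps eval_nat_numeral)
  finally show ?thesis .
qed

definition weierstrass_factor :: "complex \<Rightarrow> complex \<Rightarrow> complex" where
  "weierstrass_factor \<omega> z = (1 - z / \<omega>) * exp (z / \<omega> + z ^ 2 / (2 * \<omega> ^ 2))"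

definition log_weierstrass_factor :: "complex \<Rightarrow> complex \<Rightarrow> complex" where
  "log_weierstrass_factor \<omega> z = Ln (1 - z / \<omega>) + z / \<omega> + z ^ 2 / (2 * \<omega> ^ 2)"

lemma weierstrass_factor_holomorphic: "weierstrass_factor \<omega> holomorphic_on A"
  unfolding weierstrass_factor_def by (intro holomorphic_intros) auto

lemma weierstrass_factor_0 [simp]: "weierstrass_factor \<omega> 0 = 1"
  by (simp add: weierstrass_factor_def)

lemma weierstrass_factor_eq_0_iff: "\<omega> \<noteq> 0 \<Longrightarrow> weierstrass_factor \<omega> z = 0 \<longleftrightarrow> z = \<omega>"
  by (auto simp: weierstrass_factor_def field_simps)

lemma weierstrass_factor_uminus: "weierstrass_factor \<omega> (- z) = weierstrass_factor (- \<omega>) z"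
  by (simp add: weierstrass_factor_def power2_eq_square)

lemma log_weierstrass_factor_uminus: "log_weierstrass_factor \<omega> (- z) = log_weierstrass_factor (- \<omega>) z"
  by (simp add: log_weierstrass_factor_def power2_eq_square)

lemma has_field_derivative_weierstrass_factor:
  assumes "\<omega> \<noteq> 0" "z \<noteq> \<omega>"
  shows "(weierstrass_factor \<omega> has_field_derivative weierstrass_factor \<omega> z * zeta_term \<omega> z) (at z)"
  unfolding weierstrass_factor_def[abs_def] zeta_term_def using assms
  by (auto intro!: derivative_eq_intros simp: power2_eq_square field_simps)

lemma Re_one_minus_pos:
  fixes z \<omega> :: complex
  assumes "cmod z < cmod \<omega>"
  shows "Re (1 - z / \<omega>) > 0"
proof -
  have "cmod (z / \<omega>) < 1"
    using assms by (simp add: norm_divide divide_less_eq)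
  then show ?thesis
    using complex_Re_le_cmod[of "z / \<omega>"] by simp
qed

lemma has_field_derivative_log_weierstrass_factor:
  assumes "cmod z < cmod \<omega>"
  shows "(log_weierstrass_factor \<omega> has_field_derivative zeta_term \<omega> z) (at z)"
proof -
  have "1 - z / \<omega> \<notin> \<real>\<^sub>\<le>\<^sub>0" "\<omega> \<noteq> 0" "z \<noteq> \<omega>"
    using Re_one_minus_pos[OF assms] assms by (auto simp: complex_nonpos_Reals_iff)
  then show ?thesis
    unfolding log_weierstrass_factor_def[abs_def] zeta_term_def
    by (auto intro!: derivative_eq_intros simp: power2_eq_square field_simps)
qed

lemma exp_log_weierstrass_factor:
  assumes "cmod z < cmod \<omega>"
  shows "exp (log_weierstrass_factor \<omega> z) = weierstrass_factor \<omega> z"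
proof -
  have "1 - z / \<omega> \<noteq> 0"
    using Re_one_minus_pos[OF assms] by auto
  then show ?thesis
    by (simp add: log_weierstrass_factor_def weierstrass_factor_def exp_add add.assoc)
qed

lemma norm_log_weierstrass_factor_le:
  assumes \<omega>: "\<omega> \<noteq> 0" and z: "cmod z \<le> R" and R: "2 * R \<le> cmod \<omega>"
  shows "cmod (log_weierstrass_factor \<omega> z) \<le> 2 * R ^ 3 / cmod \<omega> ^ 3"
proof -
  have "R \<ge> 0"
    using z norm_ge_zero order_trans by blast
  have "cmod \<omega> > 0"
    using \<omega> by simp
  have less: "cmod u < cmod \<omega>" if "u \<in> cball 0 R" for u
  proof -
    have "cmod u \<le> R"
      using that by simp
    with R \<open>cmod \<omega> > 0\<close> show ?thesis
      by linarith
  qed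
  have "cmod (log_weierstrass_factor \<omega> z - log_weierstrass_factor \<omega> 0) \<le> 2 * R ^ 2 / cmod \<omega> ^ 3 * cmod (z - 0)"
  proof (rule field_differentiable_bound[where S = "cball 0 R" and f' = "zeta_term \<omega>"])
    show "(log_weierstrass_factor \<omega> has_field_derivative zeta_term \<omega> u) (at u within cball 0 R)"
      if "u \<in> cball 0 R" for u
      using has_field_derivative_log_weierstrass_factor[OF less[OF that]] by (rule has_field_derivative_at_within)
    show "cmod (zeta_term \<omega> u) \<le> 2 * R ^ 2 / cmod \<omega> ^ 3" if "u \<in> cball 0 R" for u
      using that by (intro zeta_term_bound[OF \<omega> _ R]) simp
  qed (use z \<open>R \<ge> 0\<close> in auto)
  also have "\<dots> \<le> 2 * R ^ 2 / cmod \<omega> ^ 3 * R"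
    using z by (intro mult_left_mono) auto
  finally show ?thesis
    by (simp add: log_weierstrass_factor_def power3_eq_cube power2_eq_square)
qed

lemma cayley_ratio_eq_iff:
  fixes v P Q d Y Z A B :: complex
  assumes v: "v ^ 2 \<noteq> 1" and P: "P \<noteq> 0" and Q: "Q \<noteq> 0" and d: "d \<noteq> 0"
    and YZ: "Y \<noteq> Z" and YB: "Y \<noteq> B" and ZA: "Z \<noteq> A"
    and BA: "B - A = P * Q / d ^ 2"
  shows "(v - 1) / (v + 1) = ((Y - A) * (Z - B)) / ((Y - B) * (Z - A)) \<longleftrightarrow>
         P * v = 2 * (d ^ 2 / Q * (Y * Z - (A + B) * (Y + Z) / 2 + A * B)) / (Y - Z)"
proof -
  define M where "M = Y * Z - (A + B) * (Y + Z) / 2 + A * B"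
  have "v + 1 \<noteq> 0"
  proof
    assume "v + 1 = 0"
    then have "v = - 1"
      by (simp add: eq_neg_iff_add_eq_0)
    then show False
      using v by simp
  qed
  then have "(v - 1) / (v + 1) = ((Y - A) * (Z - B)) / ((Y - B) * (Z - A)) \<longleftrightarrow>
        (v - 1) * ((Y - B) * (Z - A)) - ((Y - A) * (Z - B)) * (v + 1) = 0"
    using YB ZA by (simp add: frac_eq_eq)
  also have "(v - 1) * ((Y - B) * (Z - A)) - ((Y - A) * (Z - B)) * (v + 1) = v * ((B - A) * (Y - Z)) - 2 * M"
    by (simp add: M_def algebra_simps)
  also have "v * ((B - A) * (Y - Z)) - 2 * M = 0 \<longleftrightarrow> P * v * (Y - Z) = 2 * (d ^ 2 / Q * M)"
    using Q d by (auto simp: BA field_simps)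
  also have "\<dots> \<longleftrightarrow> P * v = 2 * (d ^ 2 / Q * M) / (Y - Z)"
    using YZ by (simp add: eq_divide_eq mult_ac)
  finally show ?thesis
    by (simp add: M_def)
qed

lemma smooth_on_imp_differentiable: "smooth_on T f \<Longrightarrow> t \<in> T \<Longrightarrow> f differentiable at t"
  using funpow_0 by (metis smooth_on_def)

section \<open>The period lattice\<close>


locale period_lattice =
  fixes w1 w2 :: complex
  assumes ratio_nonreal: "Im (w2 / w1) \<noteq> 0"
begin

abbreviation \<Lambda> :: "complex set" where
  "\<Lambda> \<equiv> lattice w1 w2"

abbreviation \<Lambda>' :: "complex set" where
  "\<Lambda>' \<equiv> lattice w1 w2 - {0}"

definition lattice_point :: "int \<Rightarrow> int \<Rightarrow> complex" where
  "lattice_point m n = of_int m * w1 + of_int n * w2"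

lemma w1_nonzero: "w1 \<noteq> 0"
  using ratio_nonreal by auto

lemma in_lattice_iff: "z \<in> \<Lambda> \<longleftrightarrow> (\<exists>m n. z = lattice_point m n)"
  by (auto simp: lattice_def lattice_point_def)

lemma lattice_point_in_lattice [simp]: "lattice_point m n \<in> \<Lambda>"
  unfolding in_lattice_iff by blast

lemma zero_in_lattice [simp]: "0 \<in> \<Lambda>"
  using lattice_point_in_lattice[of 0 0] by (simp add: lattice_point_def)

lemma lattice_add: "a \<in> \<Lambda> \<Longrightarrow> b \<in> \<Lambda> \<Longrightarrow> a + b \<in> \<Lambda>"
proof -
  have "lattice_point m n + lattice_point m' n' = lattice_point (m + m') (n + n')" for m n m' n'
    by (simp add: lattice_point_def algebra_simps)
  then show "a \<in> \<Lambda> \<Longrightarrow> b \<in> \<Lambda> \<Longrightarrow> a + b \<in> \<Lambda>"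
    unfolding in_lattice_iff by blast
qed

lemma lattice_uminus_iff [simp]: "- a \<in> \<Lambda> \<longleftrightarrow> a \<in> \<Lambda>"
proof -
  have "- lattice_point m n = lattice_point (- m) (- n)" for m n
    by (simp add: lattice_point_def)
  then have "a \<in> \<Lambda> \<Longrightarrow> - a \<in> \<Lambda>" for a
    unfolding in_lattice_iff by blast
  from this this[of "- a"] show ?thesis
    by auto
qed

lemma lattice_diff: "a \<in> \<Lambda> \<Longrightarrow> b \<in> \<Lambda> \<Longrightarrow> a - b \<in> \<Lambda>"
  using lattice_add[of a "- b"] by simp

lemma add_lattice_iff: "b \<in> \<Lambda> \<Longrightarrow> a + b \<in> \<Lambda> \<longleftrightarrow> a \<in> \<Lambda>"
  using lattice_add lattice_diff by force

lemma diff_lattice_iff: "b \<in> \<Lambda> \<Longrightarrow> a - b \<in> \<Lambda> \<longleftrightarrow> a \<in> \<Lambda>"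
  using add_lattice_iff[of "- b" a] by simp

lemma real_coordinates: "\<exists>s t :: real. a = of_real s * w1 + of_real t * w2"
proof -
  define \<tau> where "\<tau> = w2 / w1"
  define t where "t = Im (a / w1) / Im \<tau>"
  define s where "s = Re (a / w1) - t * Re \<tau>"
  have "Im \<tau> \<noteq> 0"
    using ratio_nonreal by (simp add: \<tau>_def)
  then have "a / w1 = of_real s + of_real t * \<tau>"
    by (intro complex_eqI) (simp_all add: s_def t_def)
  then have "a = of_real s * w1 + of_real t * w2"
    using w1_nonzero by (simp add: \<tau>_def field_simps)
  then show ?thesis
    by blast
qed

lemma norm_coordinates_bound:
  obtains c where "c > 0" "\<And>s t. c * (\<bar>s\<bar> + \<bar>t\<bar>) \<le> cmod (of_real s * w1 + of_real t * w2)"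
proof
  define \<tau> where "\<tau> = w2 / w1"
  define c where "c = cmod w1 * \<bar>Im \<tau>\<bar> / (cmod \<tau> + 1 + \<bar>Im \<tau>\<bar>)"
  have Im_\<tau>: "\<bar>Im \<tau>\<bar> > 0"
    using ratio_nonreal by (simp add: \<tau>_def)
  moreover have den: "cmod \<tau> + 1 + \<bar>Im \<tau>\<bar> > 0"
    using norm_ge_zero[of \<tau>] abs_ge_zero[of "Im \<tau>"] by linarith
  ultimately show "c > 0"
    using w1_nonzero by (simp add: c_def)
  fix s t :: real
  define X where "X = cmod (of_real s + of_real t * \<tau>)"
  \<comment> \<open>\<open>Im (s + t \<tau>)\<close> controls \<open>t\<close>, and then the triangle inequality controls \<open>s\<close>.\<close>
  have t: "\<bar>t\<bar> * \<bar>Im \<tau>\<bar> \<le> X"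
    using abs_Im_le_cmod[of "of_real s + of_real t * \<tau>"] by (simp add: X_def abs_mult)
  have "\<bar>s\<bar> \<le> X + \<bar>t\<bar> * cmod \<tau>"
    using norm_triangle_ineq4[of "of_real s + of_real t * \<tau>" "of_real t * \<tau>"]
    by (simp add: X_def norm_mult)
  then have "\<bar>s\<bar> * \<bar>Im \<tau>\<bar> \<le> (X + \<bar>t\<bar> * cmod \<tau>) * \<bar>Im \<tau>\<bar>"
    by (rule mult_right_mono) simp
  then have s: "\<bar>s\<bar> * \<bar>Im \<tau>\<bar> \<le> X * \<bar>Im \<tau>\<bar> + \<bar>t\<bar> * \<bar>Im \<tau>\<bar> * cmod \<tau>"
    by (simp add: algebra_simps)
  have "\<bar>t\<bar> * \<bar>Im \<tau>\<bar> * cmod \<tau> \<le> X * cmod \<tau>"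
    using t by (simp add: mult_right_mono)
  then have "(\<bar>s\<bar> + \<bar>t\<bar>) * \<bar>Im \<tau>\<bar> \<le> X * (cmod \<tau> + 1 + \<bar>Im \<tau>\<bar>)"
    using s t by (simp add: algebra_simps)
  then have "(\<bar>s\<bar> + \<bar>t\<bar>) * \<bar>Im \<tau>\<bar> / (cmod \<tau> + 1 + \<bar>Im \<tau>\<bar>) \<le> X"
    by (simp add: pos_divide_le_eq[OF den])
  then have "cmod w1 * ((\<bar>s\<bar> + \<bar>t\<bar>) * \<bar>Im \<tau>\<bar> / (cmod \<tau> + 1 + \<bar>Im \<tau>\<bar>)) \<le> cmod w1 * X"
    by (rule mult_left_mono) simp
  moreover have "c * (\<bar>s\<bar> + \<bar>t\<bar>) = cmod w1 * ((\<bar>s\<bar> + \<bar>t\<bar>) * \<bar>Im \<tau>\<bar> / (cmod \<tau> + 1 + \<bar>Im \<tau>\<bar>))"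
    by (simp add: c_def mult_ac)
  ultimately have "c * (\<bar>s\<bar> + \<bar>t\<bar>) \<le> cmod w1 * X"
    by simp
  moreover have "of_real s * w1 + of_real t * w2 = w1 * (of_real s + of_real t * \<tau>)"
    using w1_nonzero by (simp add: \<tau>_def field_simps)
  ultimately show "c * (\<bar>s\<bar> + \<bar>t\<bar>) \<le> cmod (of_real s * w1 + of_real t * w2)"
    by (simp add: X_def norm_mult)
qed

lemma norm_lattice_point_bound:
  obtains c where "c > 0" "\<And>m n. c * (\<bar>real_of_int m\<bar> + \<bar>real_of_int n\<bar>) \<le> cmod (lattice_point m n)"
  using norm_coordinates_bound by (metis lattice_point_def of_real_of_int_eq)

lemma lattice_point_eq_iff: "lattice_point m n = lattice_point m' n' \<longleftrightarrow> m = m' \<and> n = n'"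
proof
  assume "lattice_point m n = lattice_point m' n'"
  then have "lattice_point (m - m') (n - n') = 0"
    by (simp add: lattice_point_def algebra_simps)
  moreover obtain c where c: "c > 0" "\<And>m n. c * (\<bar>real_of_int m\<bar> + \<bar>real_of_int n\<bar>) \<le> cmod (lattice_point m n)"
    using norm_lattice_point_bound by blast
  ultimately have "c * (\<bar>real_of_int (m - m')\<bar> + \<bar>real_of_int (n - n')\<bar>) \<le> 0"
    by (metis norm_zero)
  then have "\<bar>real_of_int (m - m')\<bar> + \<bar>real_of_int (n - n')\<bar> \<le> 0"
    using c(1) by (simp add: mult_le_0_iff)
  then have "real_of_int (m - m') = 0" "real_of_int (n - n') = 0"
    by linarith+
  then show "m = m' \<and> n = n'"
    by simp
qed simp

lemma half_period_notin_lattice: "w1 / 2 \<notin> \<Lambda>"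
proof
  assume "w1 / 2 \<in> \<Lambda>"
  then obtain m n where "w1 / 2 = lattice_point m n"
    by (auto simp: in_lattice_iff)
  then have "lattice_point 1 0 = lattice_point (2 * m) (2 * n)"
    by (simp add: lattice_point_def algebra_simps)
  then show False
    unfolding lattice_point_eq_iff by presburger
qed

lemma finite_lattice_cball: "finite (\<Lambda> \<inter> cball z R)"
proof -
  obtain c where c: "c > 0" "\<And>m n. c * (\<bar>real_of_int m\<bar> + \<bar>real_of_int n\<bar>) \<le> cmod (lattice_point m n)"
    using norm_lattice_point_bound by blast
  define N where "N = \<lceil>(R + cmod z) / c\<rceil>"
  have "\<Lambda> \<inter> cball z R \<subseteq> (\<lambda>(m, n). lattice_point m n) ` ({-N..N} \<times> {-N..N})"
  proof
    fix \<omega> assume "\<omega> \<in> \<Lambda> \<inter> cball z R"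
    then obtain m n where mn: "\<omega> = lattice_point m n" "cmod (lattice_point m n - z) \<le> R"
      by (auto simp: in_lattice_iff dist_norm norm_minus_commute)
    then have "c * (\<bar>real_of_int m\<bar> + \<bar>real_of_int n\<bar>) \<le> R + cmod z"
      using c(2)[of m n] norm_triangle_ineq2[of "lattice_point m n" z] by linarith
    then have "\<bar>real_of_int m\<bar> + \<bar>real_of_int n\<bar> \<le> (R + cmod z) / c"
      using c(1) by (simp add: le_divide_eq mult.commute)
    then have "\<bar>m\<bar> \<le> N" "\<bar>n\<bar> \<le> N"
      unfolding N_def by (simp_all add: le_ceiling_iff)
    then show "\<omega> \<in> (\<lambda>(m, n). lattice_point m n) ` ({-N..N} \<times> {-N..N})"
      using mn by force
  qed
  then show ?thesis
    by (rule finite_subset) auto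
qed

lemma not_islimpt_lattice: "\<not> z islimpt \<Lambda>"
proof
  assume "z islimpt \<Lambda>"
  then have "z islimpt \<Lambda> \<inter> cball z 1"
    by (rule islimpt_Int_eventually) (auto intro: eventually_at_in_open' [of "ball z 1", THEN eventually_mono])
  then show False
    using islimpt_finite[OF finite_lattice_cball] by blast
qed

lemma eventually_diff_notin_lattice: "\<forall>\<^sub>F a in at p. a - c \<notin> \<Lambda>"
proof -
  have "\<forall>\<^sub>F y in at (p - c). y \<notin> \<Lambda>"
    using not_islimpt_lattice islimpt_iff_eventually by blast
  then show ?thesis
    by (simp add: filtermap_at_shift[symmetric] eventually_filtermap)
qed

lemma eventually_notin_lattice: "\<forall>\<^sub>F a in at p. a \<notin> \<Lambda>"
  using eventually_diff_notin_lattice[where c = 0] by simp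

lemma open_lattice_complement: "open (- \<Lambda>)"
  using not_islimpt_lattice closed_limpt by (auto simp: open_Compl)

lemma connected_lattice_complement: "connected (- \<Lambda>)"
proof -
  have "\<Lambda> = (\<lambda>(m, n). lattice_point m n) ` UNIV"
    by (force simp: in_lattice_iff)
  then have "countable \<Lambda>"
    by simp
  then show ?thesis
    using connected_open_diff_countable[of UNIV \<Lambda>] by (simp add: Compl_eq_Diff_UNIV connected_UNIV)
qed

lemma summable_on_inverse_cube_lattice: "(\<lambda>\<omega>. 1 / cmod \<omega> ^ 3) summable_on \<Lambda>'"
proof -
  obtain c where c: "c > 0" "\<And>m n. c * (\<bar>real_of_int m\<bar> + \<bar>real_of_int n\<bar>) \<le> cmod (lattice_point m n)"
    using norm_lattice_point_bound by blast
  have "lattice_point m n = 0 \<longleftrightarrow> m = 0 \<and> n = 0" for m n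
    using lattice_point_eq_iff[of m n 0 0] by (simp add: lattice_point_def)
  then have "\<Lambda>' = (\<lambda>(m, n). lattice_point m n) ` (- {(0, 0)})"
    by (force simp: in_lattice_iff)
  moreover have "inj_on (\<lambda>(m, n). lattice_point m n) (- {(0, 0)})"
    by (auto simp: inj_on_def lattice_point_eq_iff)
  moreover have "(\<lambda>(m, n). 1 / cmod (lattice_point m n) ^ 3) summable_on (- {(0::int, 0::int)})"
  proof (rule summable_on_comparison_test)
    show "(\<lambda>(m, n). 1 / (\<bar>real_of_int m\<bar> + \<bar>real_of_int n\<bar>) ^ 3 / c ^ 3) summable_on (- {(0::int, 0::int)})"
      using summable_on_cmult_left[OF summable_on_inverse_cube_int_pairs, of "1 / c ^ 3"]
      by (simp add: case_prod_unfold)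
    fix x :: "int \<times> int"
    assume "x \<in> - {(0, 0)}"
    then obtain m n where x: "x = (m, n)" "m \<noteq> 0 \<or> n \<noteq> 0"
      by (cases x) auto
    then have pos: "0 < c * (\<bar>real_of_int m\<bar> + \<bar>real_of_int n\<bar>)"
      using c(1) by auto
    moreover have "0 < cmod (lattice_point m n)"
      using pos c(2)[of m n] by linarith
    ultimately have "1 / cmod (lattice_point m n) ^ 3 \<le> 1 / (c * (\<bar>real_of_int m\<bar> + \<bar>real_of_int n\<bar>)) ^ 3"
      using c(2)[of m n] less_imp_le[OF pos]
      by (intro divide_left_mono power_mono) (auto simp only: zero_less_mult_iff zero_less_power)
    then show "(case x of (m, n) \<Rightarrow> 1 / cmod (lattice_point m n) ^ 3)
        \<le> (case x of (m, n) \<Rightarrow> 1 / (\<bar>real_of_int m\<bar> + \<bar>real_of_int n\<bar>) ^ 3 / c ^ 3)"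
      by (simp add: x power_mult_distrib mult.commute)
  qed (auto simp: case_prod_unfold)
  ultimately show ?thesis
    by (simp add: summable_on_reindex o_def case_prod_unfold)
qed

lemma open_avoiding_lattice_shifts: "open {x. x \<notin> \<Lambda> \<and> x + c \<notin> \<Lambda> \<and> x - c \<notin> \<Lambda>}"
proof -
  have "{x. x \<notin> \<Lambda> \<and> x + c \<notin> \<Lambda> \<and> x - c \<notin> \<Lambda>} = - \<Lambda> \<inter> (\<lambda>x. x + c) -` (- \<Lambda>) \<inter> (\<lambda>x. x - c) -` (- \<Lambda>)"
    by auto
  moreover have "open ((\<lambda>x. x + c) -` (- \<Lambda>))" "open ((\<lambda>x. x - c) -` (- \<Lambda>))"
    by (intro continuous_open_vimage open_lattice_complement continuous_intros)+
  ultimately show ?thesis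
    using open_lattice_complement by (metis open_Int)
qed

lemma lattice_complement_constant:
  fixes h :: "complex \<Rightarrow> complex"
  assumes "\<And>z. z \<notin> \<Lambda> \<Longrightarrow> (h has_field_derivative 0) (at z)" "a \<notin> \<Lambda>" "b \<notin> \<Lambda>"
  shows "h a = h b"
proof -
  have "continuous_on (- \<Lambda>) h"
    using assms(1) by (intro DERIV_continuous_on[where D = "\<lambda>_. 0"]) (auto intro: has_field_derivative_at_within)
  moreover have "\<forall>z\<in>- \<Lambda> - {}. (h has_field_derivative 0) (at z)"
    using assms(1) by simp
  ultimately obtain c where "\<And>z. z \<in> - \<Lambda> \<Longrightarrow> h z = c"
    using DERIV_zero_connected_constant[OF connected_lattice_complement open_lattice_complement finite.emptyI]
    by blast
  then show ?thesis
    using assms(2,3) by simp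
qed

lemma bounded_range_if_periodic:
  assumes cont: "continuous_on UNIV f" and periodic: "\<And>a c. c \<in> \<Lambda> \<Longrightarrow> f (a + c) = f a"
  shows "bounded (range f)"
proof -
  define K where "K = (\<lambda>(s, t). of_real s * w1 + of_real t * w2) ` ({0..1::real} \<times> {0..1::real})"
  have "compact K"
    unfolding K_def case_prod_unfold by (intro compact_continuous_image continuous_intros compact_Times compact_Icc)
  then have "bounded (f ` K)"
    using cont by (intro compact_imp_bounded compact_continuous_image) (auto intro: continuous_on_subset)
  moreover have "range f \<subseteq> f ` K"
  proof
    fix y assume "y \<in> range f"
    then obtain a s t where a: "y = f a" "a = of_real s * w1 + of_real t * w2"
      using real_coordinates by blast
    define k where "k = of_real (frac s) * w1 + of_real (frac t) * w2"
    have "k \<in> K"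
      unfolding K_def k_def by (rule image_eqI[of _ _ "(frac s, frac t)"]) (auto simp: less_imp_le[OF frac_lt_1])
    moreover have "a = k + lattice_point \<lfloor>s\<rfloor> \<lfloor>t\<rfloor>"
      by (simp add: a k_def lattice_point_def frac_def algebra_simps)
    ultimately show "y \<in> f ` K"
      using a periodic[OF lattice_point_in_lattice] by auto
  qed
  ultimately show ?thesis
    by (rule bounded_subset)
qed

definition lattice_tail :: "real \<Rightarrow> complex set" where
  "lattice_tail R = {\<omega> \<in> \<Lambda>'. 2 * R \<le> cmod \<omega>}"

lemma lattice_tail_subset: "lattice_tail R \<subseteq> \<Lambda>'"
  by (auto simp: lattice_tail_def)

lemma finite_lattice_head: "finite (\<Lambda>' - lattice_tail R)"
  by (rule finite_subset[OF _ finite_lattice_cball[of 0 "2 * R"]]) (auto simp: lattice_tail_def)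

lemma summable_on_lattice_tail:
  fixes f :: "complex \<Rightarrow> complex \<Rightarrow> complex"
  assumes "\<And>\<omega>. \<omega> \<in> lattice_tail R \<Longrightarrow> cmod (f \<omega> z) \<le> K / cmod \<omega> ^ 3"
  shows "(\<lambda>\<omega>. f \<omega> z) summable_on lattice_tail R"
proof -
  have "(\<lambda>\<omega>. K / cmod \<omega> ^ 3) summable_on lattice_tail R"
    using summable_on_subset_banach[OF summable_on_cmult_right[OF summable_on_inverse_cube_lattice, of K]]
          lattice_tail_subset by simp
  then have "(\<lambda>\<omega>. norm (f \<omega> z)) summable_on lattice_tail R"
    by (rule Infinite_Sum.abs_summable_on_comparison_test') (use assms in auto)
  then show ?thesis
    by (rule abs_summable_summable)
qed

lemma infsum_lattice_split:
  fixes f :: "complex \<Rightarrow> complex"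
  assumes "f summable_on lattice_tail R"
  shows "(\<Sum>\<^sub>\<infinity>\<omega>\<in>\<Lambda>'. f \<omega>) = (\<Sum>\<omega>\<in>\<Lambda>' - lattice_tail R. f \<omega>) + (\<Sum>\<^sub>\<infinity>\<omega>\<in>lattice_tail R. f \<omega>)"
    and "f summable_on \<Lambda>'"
proof -
  have eq: "\<Lambda>' = (\<Lambda>' - lattice_tail R) \<union> lattice_tail R"
    using lattice_tail_subset by auto
  have head: "f summable_on (\<Lambda>' - lattice_tail R)"
    by (rule summable_on_finite[OF finite_lattice_head])
  have "(\<Sum>\<^sub>\<infinity>\<omega>\<in>\<Lambda>'. f \<omega>) = (\<Sum>\<^sub>\<infinity>\<omega>\<in>(\<Lambda>' - lattice_tail R) \<union> lattice_tail R. f \<omega>)"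
    using eq by simp
  also have "\<dots> = (\<Sum>\<^sub>\<infinity>\<omega>\<in>\<Lambda>' - lattice_tail R. f \<omega>) + (\<Sum>\<^sub>\<infinity>\<omega>\<in>lattice_tail R. f \<omega>)"
    by (rule infsum_Un_disjoint) (use head assms in auto)
  finally show "(\<Sum>\<^sub>\<infinity>\<omega>\<in>\<Lambda>'. f \<omega>) = (\<Sum>\<omega>\<in>\<Lambda>' - lattice_tail R. f \<omega>) + (\<Sum>\<^sub>\<infinity>\<omega>\<in>lattice_tail R. f \<omega>)"
    using finite_lattice_head by simp
  show "f summable_on \<Lambda>'"
    by (subst eq) (rule summable_on_union[OF head assms])
qed

lemma has_field_derivative_lattice_sum:
  fixes f f' :: "complex \<Rightarrow> complex \<Rightarrow> complex"
  assumes bound: "\<And>R. R > 0 \<Longrightarrow> \<exists>K. \<forall>\<omega> z. \<omega> \<in> \<Lambda>' \<longrightarrow> cmod z \<le> R \<longrightarrow> 2 * R \<le> cmod \<omega> \<longrightarrow>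
                        cmod (f \<omega> z) \<le> K / cmod \<omega> ^ 3"
    and deriv: "\<And>\<omega> z. \<omega> \<in> \<Lambda>' \<Longrightarrow> z \<noteq> \<omega> \<Longrightarrow> (f \<omega> has_field_derivative f' \<omega> z) (at z)"
    and z0: "z0 \<notin> \<Lambda>'"
  shows "((\<lambda>z. \<Sum>\<^sub>\<infinity>\<omega>\<in>\<Lambda>'. f \<omega> z) has_field_derivative (\<Sum>\<^sub>\<infinity>\<omega>\<in>\<Lambda>'. f' \<omega> z0)) (at z0)"
    and "(\<lambda>\<omega>. f' \<omega> z0) summable_on \<Lambda>'"
proof -
  define R where "R = cmod z0 + 1"
  have R: "R > 0" "z0 \<in> ball 0 R"
    by (simp_all add: R_def add_nonneg_pos)
  obtain K where K: "\<And>\<omega> z. \<omega> \<in> lattice_tail R \<Longrightarrow> z \<in> cball 0 R \<Longrightarrow> cmod (f \<omega> z) \<le> K / cmod \<omega> ^ 3"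
    using bound[OF R(1)] by (auto simp: lattice_tail_def)
  have M: "(\<lambda>\<omega>. K / cmod \<omega> ^ 3) summable_on lattice_tail R"
    using summable_on_subset_banach[OF summable_on_cmult_right[OF summable_on_inverse_cube_lattice, of K]
            lattice_tail_subset] by simp
  have D: "(f \<omega> has_field_derivative f' \<omega> w) (at w)" if "\<omega> \<in> lattice_tail R" "w \<in> cball 0 R" for \<omega> w
    using that R(1) by (intro deriv) (auto simp: lattice_tail_def)
  note tail = has_field_derivative_infsum[OF M R(1) D K R(2)]
  have head: "((\<lambda>z. \<Sum>\<omega>\<in>\<Lambda>' - lattice_tail R. f \<omega> z) has_field_derivative
                 (\<Sum>\<omega>\<in>\<Lambda>' - lattice_tail R. f' \<omega> z0)) (at z0)"
    using z0 by (intro DERIV_sum deriv) auto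
  show "(\<lambda>\<omega>. f' \<omega> z0) summable_on \<Lambda>'"
    using infsum_lattice_split(2)[OF tail(2)] .
  have "((\<lambda>z. \<Sum>\<^sub>\<infinity>\<omega>\<in>\<Lambda>'. f \<omega> z) has_field_derivative
          (\<Sum>\<omega>\<in>\<Lambda>' - lattice_tail R. f' \<omega> z0) + (\<Sum>\<^sub>\<infinity>\<omega>\<in>lattice_tail R. f' \<omega> z0)) (at z0)"
  proof (rule has_field_derivative_transform_within_open[OF DERIV_add[OF head tail(1)]])
    fix z :: complex
    assume "z \<in> ball 0 R"
    then have "(\<lambda>\<omega>. f \<omega> z) summable_on lattice_tail R"
      using K by (intro summable_on_lattice_tail[where K = K]) auto
    then show "(\<Sum>\<omega>\<in>\<Lambda>' - lattice_tail R. f \<omega> z) + (\<Sum>\<^sub>\<infinity>\<omega>\<in>lattice_tail R. f \<omega> z) = (\<Sum>\<^sub>\<infinity>\<omega>\<in>\<Lambda>'. f \<omega> z)"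
      by (rule infsum_lattice_split(1)[symmetric])
  qed (use R in auto)
  then show "((\<lambda>z. \<Sum>\<^sub>\<infinity>\<omega>\<in>\<Lambda>'. f \<omega> z) has_field_derivative (\<Sum>\<^sub>\<infinity>\<omega>\<in>\<Lambda>'. f' \<omega> z0)) (at z0)"
    using infsum_lattice_split(1)[OF tail(2)] by simp
qed

section \<open>The Weierstrass \<open>\<wp>\<close> function\<close>


abbreviation \<P> :: "complex \<Rightarrow> complex" where
  "\<P> \<equiv> wp w1 w2"

definition wp_reg :: "complex \<Rightarrow> complex" where
  "wp_reg z = (\<Sum>\<^sub>\<infinity>\<omega>\<in>\<Lambda>'. 1 / (z - \<omega>) ^ 2 - 1 / \<omega> ^ 2)"

definition wp' :: "complex \<Rightarrow> complex" where
  "wp' z = -2 * (\<Sum>\<^sub>\<infinity>\<omega>\<in>\<Lambda>. 1 / (z - \<omega>) ^ 3)"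

lemma wp_eq_wp_reg: "\<P> z = 1 / z ^ 2 + wp_reg z"
  by (simp add: wp_def wp_reg_def)

lemma has_field_derivative_wp_reg:
  assumes "z \<notin> \<Lambda>'"
  shows "(wp_reg has_field_derivative (\<Sum>\<^sub>\<infinity>\<omega>\<in>\<Lambda>'. -2 / (z - \<omega>) ^ 3)) (at z)"
    and "(\<lambda>\<omega>. -2 / (z - \<omega>) ^ 3) summable_on \<Lambda>'"
proof -
  have deriv: "((\<lambda>z. 1 / (z - \<omega>) ^ 2 - 1 / \<omega> ^ 2) has_field_derivative -2 / (z - \<omega>) ^ 3) (at z)"
    if "z \<noteq> \<omega>" for z \<omega> :: complex
    using DERIV_diff[OF DERIV_chain2[OF DERIV_inverse_square DERIV_diff[OF DERIV_ident DERIV_const]] DERIV_const]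
          that by simp
  moreover have bound: "\<exists>K. \<forall>\<omega> z. \<omega> \<in> \<Lambda>' \<longrightarrow> cmod z \<le> R \<longrightarrow> 2 * R \<le> cmod \<omega> \<longrightarrow>
                   cmod (1 / (z - \<omega>) ^ 2 - 1 / \<omega> ^ 2) \<le> K / cmod \<omega> ^ 3" for R
    by (rule exI[of _ "10 * R"]) (auto intro: wp_term_bound)
  show "(wp_reg has_field_derivative (\<Sum>\<^sub>\<infinity>\<omega>\<in>\<Lambda>'. -2 / (z - \<omega>) ^ 3)) (at z)"
    unfolding wp_reg_def[abs_def] by (rule has_field_derivative_lattice_sum(1)[OF bound _ assms]) (rule deriv)
  show "(\<lambda>\<omega>. -2 / (z - \<omega>) ^ 3) summable_on \<Lambda>'"
    by (rule has_field_derivative_lattice_sum(2)[OF bound _ assms]) (rule deriv)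
qed

lemma has_field_derivative_wp:
  assumes z: "z \<notin> \<Lambda>"
  shows "(\<P> has_field_derivative wp' z) (at z)"
proof -
  have "z \<noteq> 0" "z \<notin> \<Lambda>'"
    using z by auto
  note reg = has_field_derivative_wp_reg[OF \<open>z \<notin> \<Lambda>'\<close>]
  have "((\<lambda>z. 1 / z ^ 2 + wp_reg z) has_field_derivative
          -2 / z ^ 3 + (\<Sum>\<^sub>\<infinity>\<omega>\<in>\<Lambda>'. -2 / (z - \<omega>) ^ 3)) (at z)"
    by (rule DERIV_add[OF DERIV_inverse_square[OF \<open>z \<noteq> 0\<close>] reg(1)])
  moreover have "-2 / z ^ 3 + (\<Sum>\<^sub>\<infinity>\<omega>\<in>\<Lambda>'. -2 / (z - \<omega>) ^ 3) = wp' z"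
  proof -
    have summable: "(\<lambda>\<omega>. 1 / (z - \<omega>) ^ 3) summable_on \<Lambda>'"
      using summable_on_cmult_right[OF reg(2), of "-1/2"] by simp
    have "(\<Sum>\<^sub>\<infinity>\<omega>\<in>\<Lambda>. 1 / (z - \<omega>) ^ 3) = 1 / z ^ 3 + (\<Sum>\<^sub>\<infinity>\<omega>\<in>\<Lambda>'. 1 / (z - \<omega>) ^ 3)"
      using infsum_insert[OF summable, where a = 0] by (simp add: insert_absorb)
    moreover have "(\<Sum>\<^sub>\<infinity>\<omega>\<in>\<Lambda>'. -2 / (z - \<omega>) ^ 3) = -2 * (\<Sum>\<^sub>\<infinity>\<omega>\<in>\<Lambda>'. 1 / (z - \<omega>) ^ 3)"
      using infsum_cmult_right'[of "-2" "\<lambda>\<omega>. 1 / (z - \<omega>) ^ 3" "\<Lambda>'"] by simp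
    ultimately show ?thesis
      by (simp add: wp'_def algebra_simps)
  qed
  ultimately show ?thesis
    by (simp add: wp_eq_wp_reg[abs_def])
qed

lemma deriv_wp: "z \<notin> \<Lambda> \<Longrightarrow> deriv \<P> z = wp' z"
  by (rule DERIV_imp_deriv[OF has_field_derivative_wp])

lemma wp'_periodic:
  assumes "c \<in> \<Lambda>"
  shows "wp' (z + c) = wp' z"
proof -
  have "bij_betw (\<lambda>\<omega>. \<omega> + c) \<Lambda> \<Lambda>"
    by (rule bij_betwI[of _ _ _ "\<lambda>\<omega>. \<omega> - c"]) (use assms in \<open>auto intro: lattice_add lattice_diff\<close>)
  from infsum_reindex_bij_betw[OF this, of "\<lambda>\<omega>. 1 / (z + c - \<omega>) ^ 3"] show ?thesis
    by (simp add: wp'_def)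
qed

lemma bij_betw_uminus_lattice: "bij_betw uminus \<Lambda>' \<Lambda>'"
  by (rule bij_betwI[of _ _ _ uminus]) auto

lemma wp_even: "\<P> (- z) = \<P> z"
proof -
  have "wp_reg z = (\<Sum>\<^sub>\<infinity>\<omega>\<in>\<Lambda>'. 1 / (z - - \<omega>) ^ 2 - 1 / (- \<omega>) ^ 2)"
    unfolding wp_reg_def
    using infsum_reindex_bij_betw[OF bij_betw_uminus_lattice, of "\<lambda>\<omega>. 1 / (z - \<omega>) ^ 2 - 1 / \<omega> ^ 2"] by simp
  also have "\<dots> = wp_reg (- z)"
    unfolding wp_reg_def by (rule infsum_cong) (simp add: power2_eq_square algebra_simps)
  finally show ?thesis
    by (simp add: wp_eq_wp_reg)
qed

lemma wp_periodic:
  assumes c: "c \<in> \<Lambda>" and z: "z \<notin> \<Lambda>"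
  shows "\<P> (z + c) = \<P> z"
proof -
  define h where "h z = \<P> (z + c) - \<P> z" for z
  have "(h has_field_derivative 0) (at y)" if "y \<notin> \<Lambda>" for y
  proof -
    have "y + c \<notin> \<Lambda>"
      using that add_lattice_iff[OF c] by simp
    then have "((\<lambda>z. \<P> (z + c)) has_field_derivative wp' (y + c)) (at y)"
      using DERIV_shift has_field_derivative_wp by blast
    then have "(h has_field_derivative wp' (y + c) - wp' y) (at y)"
      unfolding h_def using has_field_derivative_wp[OF that] by (rule DERIV_diff)
    then show ?thesis
      using wp'_periodic[OF c] by simp
  qed
  \<comment> \<open>By evenness \<open>h (- z - c) = - h z\<close>, so the constant value of \<open>h\<close> vanishes.\<close>
  moreover have "- z - c \<notin> \<Lambda>"
    using z diff_lattice_iff[OF c, of "- z"] by simp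
  ultimately have "h (- z - c) = h z"
    using z by (rule lattice_complement_constant)
  moreover have "h (- z - c) = \<P> (- z) - \<P> (- (z + c))"
    by (simp add: h_def)
  then have "h (- z - c) = - h z"
    unfolding h_def wp_even by simp
  ultimately show ?thesis
    by (simp add: h_def)
qed

lemma wp_holomorphic:
  assumes "A \<subseteq> - \<Lambda>"
  shows "\<P> holomorphic_on A"
proof -
  have "\<P> holomorphic_on - \<Lambda>"
    using has_field_derivative_wp by (auto simp: holomorphic_on_open[OF open_lattice_complement])
  then show ?thesis
    using assms by (rule holomorphic_on_subset)
qed

lemma wp_tendsto_at_lattice_point:
  assumes p: "p \<in> \<Lambda>"
  shows "((\<lambda>a. (a - p) ^ 2 * \<P> a) \<longlongrightarrow> 1) (at p)"
proof -
  have "isCont wp_reg 0"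
    using has_field_derivative_wp_reg(1)[of 0] DERIV_isCont by auto
  then have "isCont (\<lambda>a. 1 + (a - p) ^ 2 * wp_reg (a - p)) p"
    by (intro continuous_intros isCont_o2[where g = wp_reg and f = "\<lambda>a. a - p"]) auto
  then have "((\<lambda>a. 1 + (a - p) ^ 2 * wp_reg (a - p)) \<longlongrightarrow> 1) (at p)"
    by (simp add: isCont_def)
  moreover have "\<forall>\<^sub>F a in at p. 1 + (a - p) ^ 2 * wp_reg (a - p) = (a - p) ^ 2 * \<P> a"
    using eventually_diff_notin_lattice[of p p] eventually_neq_at_within[of p p UNIV]
  proof eventually_elim
    case (elim a)
    then have "\<P> a = \<P> (a - p)"
      using wp_periodic[OF p, of "a - p"] by simp
    then show ?case
      using elim by (simp add: wp_eq_wp_reg field_simps)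
  qed
  ultimately show ?thesis
    by (rule Lim_transform_eventually)
qed

section \<open>The Weierstrass \<open>\<zeta>\<close> function\<close>


definition \<zeta> :: "complex \<Rightarrow> complex" where
  "\<zeta> z = 1 / z + (\<Sum>\<^sub>\<infinity>\<omega>\<in>\<Lambda>'. zeta_term \<omega> z)"

lemma has_field_derivative_zeta:
  assumes z: "z \<notin> \<Lambda>"
  shows "(\<zeta> has_field_derivative - \<P> z) (at z)"
proof -
  have inverse: "((\<lambda>z. 1 / z) has_field_derivative -1 / z ^ 2) (at z)" if "z \<noteq> 0" for z :: complex
    using DERIV_divide[OF DERIV_const DERIV_ident that, of 1] by (simp add: power2_eq_square)
  have deriv: "(zeta_term \<omega> has_field_derivative - (1 / (z - \<omega>) ^ 2 - 1 / \<omega> ^ 2)) (at z)"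
    if "z \<noteq> \<omega>" for z \<omega> :: complex
  proof -
    have "((\<lambda>z. 1 / (z - \<omega>) + 1 / \<omega> + z / \<omega> ^ 2) has_field_derivative
             -1 / (z - \<omega>) ^ 2 * (1 - 0) + 0 + 1 / \<omega> ^ 2) (at z)"
      using that by (intro DERIV_add DERIV_chain2[OF inverse] DERIV_diff DERIV_ident DERIV_const
                           DERIV_cdivide[OF DERIV_ident, of "\<omega> ^ 2", simplified]) auto
    then show ?thesis
      by (simp add: zeta_term_def[abs_def])
  qed
  have bound: "\<exists>K. \<forall>\<omega> z. \<omega> \<in> \<Lambda>' \<longrightarrow> cmod z \<le> R \<longrightarrow> 2 * R \<le> cmod \<omega> \<longrightarrow>
                  cmod (zeta_term \<omega> z) \<le> K / cmod \<omega> ^ 3" for R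
    by (rule exI[of _ "2 * R ^ 2"]) (auto intro: zeta_term_bound)
  have "z \<noteq> 0" "z \<notin> \<Lambda>'"
    using z by auto
  have "((\<lambda>z. \<Sum>\<^sub>\<infinity>\<omega>\<in>\<Lambda>'. zeta_term \<omega> z) has_field_derivative
          (\<Sum>\<^sub>\<infinity>\<omega>\<in>\<Lambda>'. - (1 / (z - \<omega>) ^ 2 - 1 / \<omega> ^ 2))) (at z)"
    by (rule has_field_derivative_lattice_sum(1)[OF bound _ \<open>z \<notin> \<Lambda>'\<close>]) (rule deriv)
  then have "(\<zeta> has_field_derivative -1 / z ^ 2 + - wp_reg z) (at z)"
    unfolding \<zeta>_def[abs_def] wp_reg_def infsum_uminus by (rule DERIV_add[OF inverse[OF \<open>z \<noteq> 0\<close>]])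
  then show ?thesis
    by (simp add: wp_eq_wp_reg)
qed

lemma zeta_quasi_periodic:
  assumes c: "c \<in> \<Lambda>"
  obtains \<eta> where "\<And>z. z \<notin> \<Lambda> \<Longrightarrow> \<zeta> (z + c) = \<zeta> z + \<eta>"
proof
  define h where "h z = \<zeta> (z + c) - \<zeta> z" for z
  have "(h has_field_derivative 0) (at y)" if y: "y \<notin> \<Lambda>" for y
  proof -
    have "y + c \<notin> \<Lambda>"
      using y add_lattice_iff[OF c] by simp
    then have "((\<lambda>z. \<zeta> (z + c)) has_field_derivative - \<P> (y + c)) (at y)"
      using DERIV_shift has_field_derivative_zeta by blast
    then have "(h has_field_derivative - \<P> (y + c) - - \<P> y) (at y)"
      unfolding h_def using has_field_derivative_zeta[OF y] by (rule DERIV_diff)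
    then show ?thesis
      using wp_periodic[OF c y] by simp
  qed
  then have const: "h z = h (w1 / 2)" if "z \<notin> \<Lambda>" for z
    using that half_period_notin_lattice by (rule lattice_complement_constant)
  show "\<zeta> (z + c) = \<zeta> z + h (w1 / 2)" if "z \<notin> \<Lambda>" for z
    using const[OF that] by (simp add: h_def algebra_simps)
qed

section \<open>The Weierstrass \<open>\<sigma>\<close> function\<close>


abbreviation \<sigma> :: "complex \<Rightarrow> complex" where
  "\<sigma> \<equiv> wsigma w1 w2"

definition log_tail :: "real \<Rightarrow> complex \<Rightarrow> complex" where
  "log_tail R z = (\<Sum>\<^sub>\<infinity>\<omega>\<in>lattice_tail R. log_weierstrass_factor \<omega> z)"

definition sigma_quotient :: "real \<Rightarrow> complex \<Rightarrow> complex" where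
  "sigma_quotient R z = (\<Prod>\<omega>\<in>\<Lambda>' - lattice_tail R. weierstrass_factor \<omega> z) * exp (log_tail R z)"

lemma norm_log_weierstrass_factor_tail:
  "\<omega> \<in> lattice_tail R \<Longrightarrow> z \<in> cball 0 R \<Longrightarrow>
     cmod (log_weierstrass_factor \<omega> z) \<le> 2 * R ^ 3 / cmod \<omega> ^ 3"
  by (rule norm_log_weierstrass_factor_le) (auto simp: lattice_tail_def)

lemma prod_weierstrass_factor_split:
  assumes R: "R > 0" "cmod z \<le> R" and S: "finite S" "\<Lambda>' - lattice_tail R \<subseteq> S" "S \<subseteq> \<Lambda>'"
  shows "(\<Prod>\<omega>\<in>S. weierstrass_factor \<omega> z)
           = (\<Prod>\<omega>\<in>\<Lambda>' - lattice_tail R. weierstrass_factor \<omega> z)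
             * exp (\<Sum>\<omega>\<in>S \<inter> lattice_tail R. log_weierstrass_factor \<omega> z)"
proof -
  have "S = (\<Lambda>' - lattice_tail R) \<union> (S \<inter> lattice_tail R)"
    using S by auto
  then have "(\<Prod>\<omega>\<in>S. weierstrass_factor \<omega> z)
      = (\<Prod>\<omega>\<in>(\<Lambda>' - lattice_tail R) \<union> (S \<inter> lattice_tail R). weierstrass_factor \<omega> z)"
    by (rule arg_cong)
  also have "\<dots> = (\<Prod>\<omega>\<in>\<Lambda>' - lattice_tail R. weierstrass_factor \<omega> z)
                 * (\<Prod>\<omega>\<in>S \<inter> lattice_tail R. weierstrass_factor \<omega> z)"
    by (rule prod.union_disjoint) (use S finite_lattice_head in auto)
  also have "(\<Prod>\<omega>\<in>S \<inter> lattice_tail R. weierstrass_factor \<omega> z)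
      = (\<Prod>\<omega>\<in>S \<inter> lattice_tail R. exp (log_weierstrass_factor \<omega> z))"
    using R by (intro prod.cong refl exp_log_weierstrass_factor[symmetric]) (auto simp: lattice_tail_def)
  finally show ?thesis
    using S by (simp add: exp_sum)
qed

lemma sigma_eq_mult_sigma_quotient:
  assumes R: "R > 0" and z: "cmod z \<le> R"
  shows "\<sigma> z = z * sigma_quotient R z"
proof -
  define A where "A = \<Lambda>' - lattice_tail R"
  define g where "g \<omega> = (if \<omega> \<in> lattice_tail R then log_weierstrass_factor \<omega> z else 0)" for \<omega>
  have "(\<lambda>\<omega>. log_weierstrass_factor \<omega> z) summable_on lattice_tail R"
    using z by (intro summable_on_lattice_tail[where K = "2 * R ^ 3"] norm_log_weierstrass_factor_tail) auto
  then have "((\<lambda>\<omega>. log_weierstrass_factor \<omega> z) has_sum log_tail R z) (lattice_tail R)"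
    by (simp add: log_tail_def has_sum_infsum)
  then have "(g has_sum log_tail R z) \<Lambda>'"
    using has_sum_cong_neutral[of "\<Lambda>'" "lattice_tail R" g "\<lambda>\<omega>. log_weierstrass_factor \<omega> z"] lattice_tail_subset
    by (auto simp: g_def)
  then have "(sum g \<longlongrightarrow> log_tail R z) (finite_subsets_at_top \<Lambda>')"
    by (simp add: has_sum_def)
  then have "((\<lambda>S. (\<Prod>\<omega>\<in>A. weierstrass_factor \<omega> z) * exp (sum g S)) \<longlongrightarrow> sigma_quotient R z)
               (finite_subsets_at_top \<Lambda>')"
    unfolding sigma_quotient_def A_def by (intro tendsto_intros)
  moreover have "\<forall>\<^sub>F S in finite_subsets_at_top \<Lambda>'.
      (\<Prod>\<omega>\<in>A. weierstrass_factor \<omega> z) * exp (sum g S) = (\<Prod>\<omega>\<in>S. weierstrass_factor \<omega> z)"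
    unfolding eventually_finite_subsets_at_top
  proof (intro exI conjI allI impI)
    show "finite A" "A \<subseteq> \<Lambda>'"
      using finite_lattice_head by (auto simp: A_def)
    fix S assume "finite S \<and> A \<subseteq> S \<and> S \<subseteq> \<Lambda>'"
    then show "(\<Prod>\<omega>\<in>A. weierstrass_factor \<omega> z) * exp (sum g S) = (\<Prod>\<omega>\<in>S. weierstrass_factor \<omega> z)"
      using prod_weierstrass_factor_split[OF R z] by (simp add: A_def g_def sum.inter_restrict)
  qed
  ultimately have "((\<lambda>S. \<Prod>\<omega>\<in>S. weierstrass_factor \<omega> z) \<longlongrightarrow> sigma_quotient R z) (finite_subsets_at_top \<Lambda>')"
    by (rule Lim_transform_eventually)
  then have "Lim (finite_subsets_at_top \<Lambda>') (\<lambda>S. \<Prod>\<omega>\<in>S. weierstrass_factor \<omega> z) = sigma_quotient R z"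
    by (intro tendsto_Lim) simp_all
  then show ?thesis
    by (simp add: wsigma_def weierstrass_factor_def)
qed

lemma has_field_derivative_log_tail:
  assumes R: "R > 0" and z: "cmod z < R"
  shows "(log_tail R has_field_derivative (\<Sum>\<^sub>\<infinity>\<omega>\<in>lattice_tail R. zeta_term \<omega> z)) (at z)"
    and "(\<lambda>\<omega>. zeta_term \<omega> z) summable_on lattice_tail R"
proof -
  have M: "(\<lambda>\<omega>. 2 * R ^ 3 / cmod \<omega> ^ 3) summable_on lattice_tail R"
    using summable_on_subset_banach[OF summable_on_cmult_right[OF summable_on_inverse_cube_lattice, of "2 * R ^ 3"]
            lattice_tail_subset] by simp
  have D: "(log_weierstrass_factor \<omega> has_field_derivative zeta_term \<omega> u) (at u)"
    if "\<omega> \<in> lattice_tail R" "u \<in> cball 0 R" for \<omega> u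
    using that R by (intro has_field_derivative_log_weierstrass_factor) (auto simp: lattice_tail_def)
  have "z \<in> ball 0 R"
    using z by simp
  note tail = has_field_derivative_infsum[OF M R D norm_log_weierstrass_factor_tail this]
  show "(log_tail R has_field_derivative (\<Sum>\<^sub>\<infinity>\<omega>\<in>lattice_tail R. zeta_term \<omega> z)) (at z)"
    unfolding log_tail_def[abs_def] by (rule tail(1))
  show "(\<lambda>\<omega>. zeta_term \<omega> z) summable_on lattice_tail R"
    by (rule tail(2))
qed

lemma sigma_quotient_holomorphic:
  assumes "R > 0"
  shows "sigma_quotient R holomorphic_on ball 0 R"
proof -
  have "log_tail R field_differentiable at z" if "z \<in> ball 0 R" for z
    using has_field_derivative_log_tail(1)[OF assms, of z] that by (auto simp: field_differentiable_def)
  then have "log_tail R holomorphic_on ball 0 R"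
    by (simp add: holomorphic_on_def field_differentiable_at_within)
  then show ?thesis
    unfolding sigma_quotient_def[abs_def]
    by (intro holomorphic_intros weierstrass_factor_holomorphic)
qed

lemma sigma_holomorphic: "\<sigma> holomorphic_on A"
proof -
  have "\<exists>D. (\<sigma> has_field_derivative D) (at z)" for z
  proof -
    define R where "R = cmod z + 1"
    have R: "R > 0" "z \<in> ball 0 R"
      by (simp_all add: R_def add_nonneg_pos)
    have "(\<lambda>u. u * sigma_quotient R u) holomorphic_on ball 0 R"
      using sigma_quotient_holomorphic[OF R(1)] by (intro holomorphic_intros)
    then have "\<sigma> holomorphic_on ball 0 R"
      by (rule holomorphic_transform) (use R(1) sigma_eq_mult_sigma_quotient in simp)
    then show ?thesis
      using R(2) by (simp add: holomorphic_on_open)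
  qed
  then have "\<sigma> holomorphic_on UNIV"
    by (simp add: holomorphic_on_open)
  then show ?thesis
    by (rule holomorphic_on_subset) simp
qed

lemma sigma_eq_0_iff: "\<sigma> z = 0 \<longleftrightarrow> z \<in> \<Lambda>"
proof -
  define R where "R = cmod z + 1"
  have R: "R > 0" "cmod z \<le> R"
    by (simp_all add: R_def add_nonneg_pos)
  have "\<sigma> z = 0 \<longleftrightarrow> z = 0 \<or> (\<exists>\<omega>\<in>\<Lambda>' - lattice_tail R. weierstrass_factor \<omega> z = 0)"
    using sigma_eq_mult_sigma_quotient[OF R] finite_lattice_head by (simp add: sigma_quotient_def)
  also have "\<dots> \<longleftrightarrow> z = 0 \<or> z \<in> \<Lambda>' - lattice_tail R"
    using weierstrass_factor_eq_0_iff by auto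
  also have "\<dots> \<longleftrightarrow> z \<in> \<Lambda>"
    using norm_ge_zero[of z] by (auto simp: lattice_tail_def R_def simp del: norm_ge_zero)
  finally show ?thesis .
qed

lemma has_field_derivative_sigma:
  assumes z: "z \<notin> \<Lambda>"
  shows "(\<sigma> has_field_derivative \<sigma> z * \<zeta> z) (at z)"
proof -
  define R where "R = cmod z + 1"
  have R: "R > 0" "cmod z < R"
    by (simp_all add: R_def add_nonneg_pos)
  define A where "A = \<Lambda>' - lattice_tail R"
  define S where "S = (\<Sum>\<omega>\<in>A. zeta_term \<omega> z) + (\<Sum>\<^sub>\<infinity>\<omega>\<in>lattice_tail R. zeta_term \<omega> z)"
  have nonzero: "weierstrass_factor \<omega> z \<noteq> 0" if "\<omega> \<in> A" for \<omega>
    using that z weierstrass_factor_eq_0_iff[of \<omega> z] by (auto simp: A_def)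
  have "((\<lambda>u. \<Prod>\<omega>\<in>A. weierstrass_factor \<omega> u) has_field_derivative
          (\<Prod>\<omega>\<in>A. weierstrass_factor \<omega> z) * (\<Sum>\<omega>\<in>A. weierstrass_factor \<omega> z * zeta_term \<omega> z / weierstrass_factor \<omega> z)) (at z)"
    using z nonzero finite_lattice_head
    by (intro has_field_derivative_prod' has_field_derivative_weierstrass_factor) (auto simp: A_def)
  moreover have "(\<Sum>\<omega>\<in>A. weierstrass_factor \<omega> z * zeta_term \<omega> z / weierstrass_factor \<omega> z) = (\<Sum>\<omega>\<in>A. zeta_term \<omega> z)"
    using nonzero by (intro sum.cong) auto
  ultimately have "(sigma_quotient R has_field_derivative sigma_quotient R z * S) (at z)"
    unfolding sigma_quotient_def[abs_def] A_def[symmetric] S_def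
    using DERIV_mult[OF _ DERIV_chain2[OF DERIV_exp has_field_derivative_log_tail(1)[OF R]]]
    by (fastforce simp: algebra_simps)
  then have "((\<lambda>u. u * sigma_quotient R u) has_field_derivative sigma_quotient R z * (1 + z * S)) (at z)"
    using DERIV_mult[OF DERIV_ident] by (fastforce simp: algebra_simps)
  then have "(\<sigma> has_field_derivative sigma_quotient R z * (1 + z * S)) (at z)"
    by (rule has_field_derivative_transform_within_open[where S = "ball 0 R"])
       (use R sigma_eq_mult_sigma_quotient in auto)
  moreover have "sigma_quotient R z * (1 + z * S) = \<sigma> z * \<zeta> z"
  proof -
    have "\<zeta> z = 1 / z + S"
      unfolding \<zeta>_def S_def A_def using infsum_lattice_split(1)[OF has_field_derivative_log_tail(2)[OF R]] by simp
    moreover have "z \<noteq> 0"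
      using z by auto
    ultimately have "z * \<zeta> z = 1 + z * S"
      by (simp add: field_simps)
    then show ?thesis
      using sigma_eq_mult_sigma_quotient[OF R(1) less_imp_le[OF R(2)]] by (metis mult.assoc mult.commute)
  qed
  ultimately show ?thesis
    by simp
qed

lemma has_field_derivative_sigma_0: "(\<sigma> has_field_derivative 1) (at 0)"
proof -
  obtain D where "(sigma_quotient 1 has_field_derivative D) (at 0)"
    using sigma_quotient_holomorphic[of 1] by (metis centre_in_ball holomorphic_on_open open_ball zero_less_one)
  then have "((\<lambda>u. u * sigma_quotient 1 u) has_field_derivative 1 * sigma_quotient 1 0 + D * 0) (at 0)"
    by (rule DERIV_mult[OF DERIV_ident])
  then have "(\<sigma> has_field_derivative 1 * sigma_quotient 1 0 + D * 0) (at 0)"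
    by (rule has_field_derivative_transform_within_open[where S = "ball 0 1"])
       (use sigma_eq_mult_sigma_quotient[of 1] in auto)
  moreover have "sigma_quotient 1 0 = 1"
    by (simp add: sigma_quotient_def log_tail_def log_weierstrass_factor_def)
  ultimately show ?thesis
    by simp
qed

lemma sigma_uminus: "\<sigma> (- z) = - \<sigma> z"
proof -
  define R where "R = cmod z + 1"
  have R: "R > 0" "cmod z \<le> R" "cmod (- z) \<le> R"
    by (simp_all add: R_def add_nonneg_pos)
  have bij: "bij_betw uminus (\<Lambda>' - lattice_tail R) (\<Lambda>' - lattice_tail R)"
    "bij_betw uminus (lattice_tail R) (lattice_tail R)"
    by (auto intro!: bij_betwI[of _ _ _ uminus] simp: lattice_tail_def)
  have "(\<Prod>\<omega>\<in>\<Lambda>' - lattice_tail R. weierstrass_factor \<omega> (- z)) = (\<Prod>\<omega>\<in>\<Lambda>' - lattice_tail R. weierstrass_factor \<omega> z)"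
    using prod.reindex_bij_betw[OF bij(1), of "\<lambda>\<omega>. weierstrass_factor \<omega> z"]
    by (simp add: weierstrass_factor_uminus)
  moreover have "log_tail R (- z) = log_tail R z"
    using infsum_reindex_bij_betw[OF bij(2), of "\<lambda>\<omega>. log_weierstrass_factor \<omega> z"]
    by (simp add: log_tail_def log_weierstrass_factor_uminus)
  ultimately show ?thesis
    using sigma_eq_mult_sigma_quotient[OF R(1,2)] sigma_eq_mult_sigma_quotient[OF R(1,3)]
    by (simp add: sigma_quotient_def)
qed

lemma isCont_sigma: "isCont \<sigma> z"
  using holomorphic_on_imp_continuous_on[OF sigma_holomorphic[of UNIV]]
  by (simp add: continuous_on_eq_continuous_at)

lemma sigma_quasi_periodic:
  assumes c: "c \<in> \<Lambda>"
  obtains C \<eta> where "C \<noteq> 0" "\<And>z. \<sigma> (z + c) = C * exp (\<eta> * z) * \<sigma> z"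
proof -
  obtain \<eta> where \<eta>: "\<And>z. z \<notin> \<Lambda> \<Longrightarrow> \<zeta> (z + c) = \<zeta> z + \<eta>"
    using zeta_quasi_periodic[OF c] by blast
  define q where "q z = \<sigma> (z + c) * exp (- \<eta> * z) / \<sigma> z" for z
  have "(q has_field_derivative 0) (at y)" if y: "y \<notin> \<Lambda>" for y
  proof -
    have "y + c \<notin> \<Lambda>" "\<sigma> y \<noteq> 0"
      using y add_lattice_iff[OF c] sigma_eq_0_iff by auto
    then have "((\<lambda>z. \<sigma> (z + c)) has_field_derivative \<sigma> (y + c) * \<zeta> (y + c)) (at y)"
      using DERIV_shift has_field_derivative_sigma by blast
    then have "(q has_field_derivative
        ((\<sigma> (y + c) * \<zeta> (y + c) * exp (- \<eta> * y) + \<sigma> (y + c) * (exp (- \<eta> * y) * - \<eta>)) * \<sigma> y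
          - \<sigma> (y + c) * exp (- \<eta> * y) * (\<sigma> y * \<zeta> y)) / (\<sigma> y * \<sigma> y)) (at y)"
      unfolding q_def[abs_def] using \<open>\<sigma> y \<noteq> 0\<close> has_field_derivative_sigma[OF y]
      by (auto intro!: derivative_eq_intros)
    then show ?thesis
      using \<eta>[OF y] by (simp add: algebra_simps)
  qed
  then have q: "q z = q (w1 / 2)" if "z \<notin> \<Lambda>" for z
    using that half_period_notin_lattice by (rule lattice_complement_constant)
  show ?thesis
  proof
    show "q (w1 / 2) \<noteq> 0"
      using half_period_notin_lattice add_lattice_iff[OF c, of "w1 / 2"]
      by (simp add: q_def sigma_eq_0_iff)
    show "\<sigma> (z + c) = q (w1 / 2) * exp (\<eta> * z) * \<sigma> z" for z
    proof (cases "z \<in> \<Lambda>")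
      case True
      then have "\<sigma> z = 0" "\<sigma> (z + c) = 0"
        using lattice_add[OF True c] by (simp_all add: sigma_eq_0_iff)
      then show ?thesis
        by simp
    next
      case False
      then show ?thesis
        using q[OF False] sigma_eq_0_iff[of z]
        by (simp add: q_def field_simps exp_minus)
    qed
  qed
qed

lemma has_field_derivative_sigma_lattice:
  assumes c: "c \<in> \<Lambda>"
  obtains D where "D \<noteq> 0" "(\<sigma> has_field_derivative D) (at c)"
proof -
  obtain C \<eta> where C: "C \<noteq> 0" "\<And>z. \<sigma> (z + c) = C * exp (\<eta> * z) * \<sigma> z"
    using sigma_quasi_periodic[OF c] by blast
  have "((\<lambda>z. C * exp (\<eta> * z) * \<sigma> z) has_field_derivative C * exp (\<eta> * 0) * 1 + C * (exp (\<eta> * 0) * \<eta>) * \<sigma> 0) (at 0)"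
    by (auto intro!: derivative_eq_intros has_field_derivative_sigma_0)
  then have "((\<lambda>z. \<sigma> (z + c)) has_field_derivative C) (at 0)"
    using C(2) sigma_eq_0_iff[of 0] by simp
  then have "(\<sigma> has_field_derivative C) (at c)"
    using DERIV_shift[of \<sigma> C 0 c] by simp
  then show ?thesis
    using that C(1) by blast
qed

section \<open>The product formula for \<open>\<sigma>\<close> and the addition formulas\<close>


definition sigma_singular :: "complex \<Rightarrow> complex set" where
  "sigma_singular b = {a. a \<in> \<Lambda> \<or> a - b \<in> \<Lambda> \<or> a + b \<in> \<Lambda>}"

definition sigma_ratio :: "complex \<Rightarrow> complex \<Rightarrow> complex" where
  "sigma_ratio b a = \<sigma> a ^ 2 * \<sigma> b ^ 2 * (\<P> b - \<P> a) / (\<sigma> (a + b) * \<sigma> (a - b))"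

lemma eventually_notin_sigma_singular: "\<forall>\<^sub>F a in at p. a \<notin> sigma_singular b"
  using eventually_notin_lattice[of p] eventually_diff_notin_lattice[where p = p and c = b]
        eventually_diff_notin_lattice[where p = p and c = "- b"]
  by eventually_elim (simp add: sigma_singular_def)

lemma open_sigma_singular_complement: "open (- sigma_singular b)"
proof -
  have "closed (sigma_singular b)"
    unfolding closed_limpt islimpt_iff_eventually using eventually_notin_sigma_singular by blast
  then show ?thesis
    by (simp add: open_Compl)
qed

lemma sigma_ratio_holomorphic: "sigma_ratio b holomorphic_on - sigma_singular b"
proof -
  have "\<P> holomorphic_on - sigma_singular b"
    by (rule wp_holomorphic) (auto simp: sigma_singular_def)
  moreover have "\<sigma> (a + b) * \<sigma> (a - b) \<noteq> 0" if "a \<in> - sigma_singular b" for a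
    using that by (simp add: sigma_eq_0_iff sigma_singular_def)
  ultimately show ?thesis
    unfolding sigma_ratio_def[abs_def]
    by (intro holomorphic_intros holomorphic_on_compose_gen[OF _ sigma_holomorphic, unfolded o_def]) auto
qed

lemma sigma_ratio_uminus: "sigma_ratio (- b) = sigma_ratio b"
  by (rule ext) (simp add: sigma_ratio_def sigma_uminus wp_even mult.commute)

lemma sigma_ratio_periodic:
  assumes a: "a \<notin> sigma_singular b" and c: "c \<in> \<Lambda>"
  shows "sigma_ratio b (a + c) = sigma_ratio b a"
proof -
  obtain C \<eta> where C: "C \<noteq> 0" "\<And>z. \<sigma> (z + c) = C * exp (\<eta> * z) * \<sigma> z"
    using sigma_quasi_periodic[OF c] by blast
  \<comment> \<open>Numerator and denominator both pick up the factor \<open>C\<^sup>2 e\<^sup>2\<^sup>\<eta>\<^sup>a\<close>.\<close>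
  define K where "K = C * C * exp (\<eta> * a) * exp (\<eta> * a)"
  have "K \<noteq> 0"
    using C(1) by (simp add: K_def)
  have "\<P> (a + c) = \<P> a"
    using a by (intro wp_periodic[OF c]) (simp add: sigma_singular_def)
  then have num: "\<sigma> (a + c) ^ 2 * \<sigma> b ^ 2 * (\<P> b - \<P> (a + c)) = K * (\<sigma> a ^ 2 * \<sigma> b ^ 2 * (\<P> b - \<P> a))"
    by (simp add: C(2)[of a] K_def power2_eq_square mult_ac)
  have "\<sigma> (a + c + b) = C * exp (\<eta> * a) * exp (\<eta> * b) * \<sigma> (a + b)"
    "\<sigma> (a + c - b) = C * exp (\<eta> * a) / exp (\<eta> * b) * \<sigma> (a - b)"
    using C(2)[of "a + b"] C(2)[of "a - b"]
    by (simp_all add: algebra_simps exp_add exp_diff)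
  then have den: "\<sigma> (a + c + b) * \<sigma> (a + c - b) = K * (\<sigma> (a + b) * \<sigma> (a - b))"
    by (simp add: K_def field_simps)
  show ?thesis
    unfolding sigma_ratio_def num den using \<open>K \<noteq> 0\<close> by (rule mult_divide_mult_cancel_left)
qed

lemma tendsto_sigma_ratio_lattice:
  assumes p: "p \<in> \<Lambda>" and b: "b \<notin> \<Lambda>" and D: "(\<sigma> has_field_derivative D) (at p)"
  shows "(sigma_ratio b \<longlongrightarrow> - (\<sigma> b ^ 2 * D ^ 2 / (\<sigma> (p + b) * \<sigma> (p - b)))) (at p)"
proof -
  have "\<sigma> p = 0"
    using p by (simp add: sigma_eq_0_iff)
  then have "((\<lambda>a. \<sigma> a / (a - p)) \<longlongrightarrow> D) (at p)"
    using D by (simp add: has_field_derivative_iff)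
  moreover have "((\<lambda>a. (a - p) ^ 2) \<longlongrightarrow> 0) (at p)"
    by (intro tendsto_eq_intros) auto
  moreover have "((\<lambda>a. \<sigma> (a + b)) \<longlongrightarrow> \<sigma> (p + b)) (at p)" "((\<lambda>a. \<sigma> (a - b)) \<longlongrightarrow> \<sigma> (p - b)) (at p)"
    by (intro isCont_tendsto_compose[OF isCont_sigma] tendsto_intros)+
  moreover have "p + b \<notin> \<Lambda>" "p - b \<notin> \<Lambda>"
    using b p lattice_diff[of "p + b" p] lattice_diff[of p "p - b"] by auto
  then have "\<sigma> (p + b) * \<sigma> (p - b) \<noteq> 0"
    by (simp add: sigma_eq_0_iff)
  ultimately have "((\<lambda>a. \<sigma> b ^ 2 * ((\<sigma> a / (a - p)) ^ 2 * ((a - p) ^ 2 * \<P> b - (a - p) ^ 2 * \<P> a))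
                          / (\<sigma> (a + b) * \<sigma> (a - b)))
        \<longlongrightarrow> \<sigma> b ^ 2 * (D ^ 2 * (0 * \<P> b - 1)) / (\<sigma> (p + b) * \<sigma> (p - b))) (at p)"
    by (intro tendsto_intros wp_tendsto_at_lattice_point[OF p])
  moreover have "\<forall>\<^sub>F a in at p. \<sigma> b ^ 2 * ((\<sigma> a / (a - p)) ^ 2 * ((a - p) ^ 2 * \<P> b - (a - p) ^ 2 * \<P> a))
                                  / (\<sigma> (a + b) * \<sigma> (a - b)) = sigma_ratio b a"
    using eventually_neq_at_within[of p p UNIV]
  proof eventually_elim
    case (elim a)
    have "(x / d) ^ 2 * (d ^ 2 * B - d ^ 2 * A) = x ^ 2 * (B - A)" if "d \<noteq> 0" for x d A B :: complex
      using that by (simp add: field_simps power2_eq_square)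
    then have "(\<sigma> a / (a - p)) ^ 2 * ((a - p) ^ 2 * \<P> b - (a - p) ^ 2 * \<P> a) = \<sigma> a ^ 2 * (\<P> b - \<P> a)"
      using elim by simp
    then show ?case
      by (simp add: sigma_ratio_def mult_ac)
  qed
  ultimately show ?thesis
    by (auto dest: Lim_transform_eventually)
qed

lemma tendsto_sigma_ratio_shifted_lattice:
  assumes b: "b \<notin> \<Lambda>" "b + b \<notin> \<Lambda>" and p: "p - b \<in> \<Lambda>"
  shows "\<exists>L. (sigma_ratio b \<longlongrightarrow> L) (at p)"
proof -
  have "p \<notin> \<Lambda>" "p + b \<notin> \<Lambda>"
    using b add_lattice_iff[OF p, of b] add_lattice_iff[OF p, of "b + b"] by (simp_all add: algebra_simps)
  have "\<P> p = \<P> b"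
    using wp_periodic[OF p b(1)] by simp
  obtain D where D: "D \<noteq> 0" "(\<sigma> has_field_derivative D) (at (p - b))"
    using has_field_derivative_sigma_lattice[OF p] by blast
  have "((\<lambda>a. \<sigma> (a - b)) has_field_derivative D) (at p)"
    using DERIV_shift[of \<sigma> D p "- b"] D(2) by simp
  moreover have "\<sigma> (p - b) = 0"
    using p by (simp add: sigma_eq_0_iff)
  ultimately have "((\<lambda>a. \<sigma> (a - b) / (a - p)) \<longlongrightarrow> D) (at p)"
    by (simp add: has_field_derivative_iff)
  moreover have "((\<lambda>a. (\<P> a - \<P> p) / (a - p)) \<longlongrightarrow> wp' p) (at p)"
    using has_field_derivative_wp[OF \<open>p \<notin> \<Lambda>\<close>] by (simp add: has_field_derivative_iff)
  moreover have "\<sigma> (p + b) * D \<noteq> 0"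
    using \<open>p + b \<notin> \<Lambda>\<close> D(1) by (simp add: sigma_eq_0_iff)
  ultimately have "((\<lambda>a. \<sigma> a ^ 2 * \<sigma> b ^ 2 * (- ((\<P> a - \<P> p) / (a - p))) / (\<sigma> (a + b) * (\<sigma> (a - b) / (a - p))))
      \<longlongrightarrow> \<sigma> p ^ 2 * \<sigma> b ^ 2 * (- wp' p) / (\<sigma> (p + b) * D)) (at p)"
    by (intro tendsto_intros isCont_tendsto_compose[OF isCont_sigma])
  moreover have "\<forall>\<^sub>F a in at p. \<sigma> a ^ 2 * \<sigma> b ^ 2 * (- ((\<P> a - \<P> p) / (a - p))) / (\<sigma> (a + b) * (\<sigma> (a - b) / (a - p)))
                             = sigma_ratio b a"
    using eventually_neq_at_within[of p p UNIV]
  proof eventually_elim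
    case (elim a)
    have "- (X * (A - B) / Z) = X * (B - A) / Z" for X A B Z :: complex
      by (cases "Z = 0") (simp_all add: field_simps)
    then show ?case
      using elim unfolding \<open>\<P> p = \<P> b\<close> sigma_ratio_def by simp
  qed
  ultimately show ?thesis
    using Lim_transform_eventually by blast
qed

lemma sigma_ratio_has_limit:
  assumes b: "b \<notin> \<Lambda>" "b + b \<notin> \<Lambda>"
  shows "\<exists>L. (sigma_ratio b \<longlongrightarrow> L) (at p)"
proof -
  consider "p \<notin> sigma_singular b" | "p \<in> \<Lambda>" | "p - b \<in> \<Lambda>" | "p - - b \<in> \<Lambda>"
    by (auto simp: sigma_singular_def)
  then show ?thesis
  proof cases
    case 1
    then have "isCont (sigma_ratio b) p"
      using holomorphic_on_imp_continuous_on[OF sigma_ratio_holomorphic] open_sigma_singular_complement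
      by (simp add: continuous_on_eq_continuous_at)
    then show ?thesis
      by (auto simp: isCont_def)
  next
    case 2
    then show ?thesis
      using tendsto_sigma_ratio_lattice[OF 2 b(1)] has_field_derivative_sigma_lattice[OF 2] by blast
  next
    case 3
    then show ?thesis
      by (rule tendsto_sigma_ratio_shifted_lattice[OF b])
  next
    case 4
    have "- b \<notin> \<Lambda>" "- b + - b \<notin> \<Lambda>"
      using b lattice_uminus_iff[of "b + b"] by simp_all
    then show ?thesis
      using tendsto_sigma_ratio_shifted_lattice[OF _ _ 4] by (simp add: sigma_ratio_uminus)
  qed
qed

lemma remove_sings_sigma_ratio_holomorphic:
  assumes b: "b \<notin> \<Lambda>" "b + b \<notin> \<Lambda>"
  shows "remove_sings (sigma_ratio b) holomorphic_on UNIV"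
proof -
  have "remove_sings (sigma_ratio b) analytic_on {p}" for p
  proof -
    obtain r where r: "r > 0" "\<And>a. a \<noteq> p \<Longrightarrow> dist a p < r \<Longrightarrow> a \<notin> sigma_singular b"
      using eventually_notin_sigma_singular[where p = p and b = b] by (auto simp: eventually_at)
    have "sigma_ratio b holomorphic_on ball p r - {p}"
      using r(2) by (intro holomorphic_on_subset[OF sigma_ratio_holomorphic]) (auto simp: dist_commute)
    then have "isolated_singularity_at (sigma_ratio b) p"
      using r(1) by (intro isolated_singularity_at_holomorphic[of _ "ball p r"]) auto
    moreover obtain L where "(sigma_ratio b \<longlongrightarrow> L) (at p)"
      using sigma_ratio_has_limit[OF b] by blast
    ultimately show ?thesis
      by (rule remove_sings_analytic_at)
  qed
  then have "remove_sings (sigma_ratio b) analytic_on UNIV"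
    by (subst analytic_on_analytic_at) blast
  then show ?thesis
    by (rule analytic_imp_holomorphic)
qed

lemma remove_sings_sigma_ratio_periodic:
  assumes c: "c \<in> \<Lambda>"
  shows "remove_sings (sigma_ratio b) (a + c) = remove_sings (sigma_ratio b) a"
proof -
  have "\<forall>\<^sub>F w in at 0. a + w \<notin> sigma_singular b"
    using eventually_notin_sigma_singular[where p = a and b = b] by (simp add: at_to_0[of a] eventually_filtermap add.commute)
  then have "\<forall>\<^sub>F w in at 0. sigma_ratio b (a + c + w) = sigma_ratio b (a + w)"
  proof eventually_elim
    case (elim w)
    then show ?case
      using sigma_ratio_periodic[OF elim c] by (simp add: add_ac)
  qed
  then have "remove_sings (\<lambda>w. sigma_ratio b (a + c + w)) 0 = remove_sings (\<lambda>w. sigma_ratio b (a + w)) 0"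
    by (rule remove_sings_cong) simp
  then show ?thesis
    by (simp only: remove_sings_shift_0[symmetric])
qed

lemma sigma_ratio_eq_1:
  assumes b: "b \<notin> \<Lambda>" "b + b \<notin> \<Lambda>" and a: "a \<notin> sigma_singular b"
  shows "sigma_ratio b a = 1"
proof -
  let ?g = "remove_sings (sigma_ratio b)"
  have hol: "?g holomorphic_on UNIV"
    by (rule remove_sings_sigma_ratio_holomorphic[OF b])
  have "bounded (range ?g)"
    using holomorphic_on_imp_continuous_on[OF hol] remove_sings_sigma_ratio_periodic
    by (rule bounded_range_if_periodic)
  then have "?g constant_on UNIV"
    by (rule Liouville_theorem[OF hol])
  moreover have "?g 0 = 1"
  proof (rule remove_sings_eqI)
    have "\<sigma> b \<noteq> 0"
      using b by (simp add: sigma_eq_0_iff)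
    then show "(sigma_ratio b \<longlongrightarrow> 1) (at 0)"
      using tendsto_sigma_ratio_lattice[OF zero_in_lattice b(1) has_field_derivative_sigma_0]
      by (simp add: sigma_uminus power2_eq_square)
  qed
  moreover have "?g a = sigma_ratio b a"
    using a sigma_ratio_holomorphic open_sigma_singular_complement
    by (intro remove_sings_at_analytic) (auto simp: analytic_at)
  ultimately show ?thesis
    unfolding constant_on_def by (metis UNIV_I)
qed

lemma sigma_add_mult_sigma_diff_aux:
  assumes a: "a \<notin> \<Lambda>" and b: "b \<notin> \<Lambda>" "b + b \<notin> \<Lambda>"
  shows "\<sigma> (a + b) * \<sigma> (a - b) = \<sigma> a ^ 2 * \<sigma> b ^ 2 * (\<P> b - \<P> a)"
proof (cases "a \<in> sigma_singular b")
  case True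
  then consider "a - b \<in> \<Lambda>" | "a + b \<in> \<Lambda>"
    using a by (auto simp: sigma_singular_def)
  then show ?thesis
  proof cases
    case 1
    then have "\<P> a = \<P> b"
      using wp_periodic[OF 1 b(1)] by simp
    then show ?thesis
      using 1 by (simp add: sigma_eq_0_iff)
  next
    case 2
    then have "\<P> a = \<P> b"
      using wp_periodic[OF 2, of "- b"] b(1) by (simp add: wp_even)
    then show ?thesis
      using 2 by (simp add: sigma_eq_0_iff)
  qed
next
  case False
  then have "\<sigma> (a + b) * \<sigma> (a - b) \<noteq> 0"
    by (simp add: sigma_eq_0_iff sigma_singular_def)
  then show ?thesis
    using sigma_ratio_eq_1[OF b False] by (simp add: sigma_ratio_def field_simps)
qed

text \<open>The case \<open>b + b \<in> \<Lambda>\<close> follows from the auxiliary lemma by continuity in \<open>b\<close>.\<close>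
lemma sigma_add_mult_sigma_diff:
  assumes a: "a \<notin> \<Lambda>" and b: "b \<notin> \<Lambda>"
  shows "\<sigma> (a + b) * \<sigma> (a - b) = \<sigma> a ^ 2 * \<sigma> b ^ 2 * (\<P> b - \<P> a)"
proof -
  define F1 where "F1 x = \<sigma> (a + x) * \<sigma> (a - x)" for x
  define F2 where "F2 x = \<sigma> a ^ 2 * \<sigma> x ^ 2 * (\<P> x - \<P> a)" for x
  have "isCont \<P> b"
    using has_field_derivative_wp[OF b] DERIV_isCont by blast
  then have F2: "(F2 \<longlongrightarrow> F2 b) (at b)"
    unfolding F2_def by (intro tendsto_intros isCont_tendsto_compose[OF isCont_sigma] isCont_tendsto_compose[of b \<P>])
  have F1: "(F1 \<longlongrightarrow> F1 b) (at b)"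
    unfolding F1_def by (intro tendsto_intros isCont_tendsto_compose[OF isCont_sigma])
  have "filterlim (\<lambda>x. 2 * x) (at (2 * b)) (at b)"
    by (rule filterlim_atI) (auto intro!: tendsto_eq_intros simp: eventually_at_filter)
  then have "\<forall>\<^sub>F x in at b. 2 * x \<notin> \<Lambda>"
    by (rule eventually_compose_filterlim[OF eventually_notin_lattice])
  then have "\<forall>\<^sub>F x in at b. F1 x = F2 x"
    using eventually_notin_lattice[of b]
  proof eventually_elim
    case (elim x)
    then have "x + x \<notin> \<Lambda>"
      by (metis mult_2)
    then show ?case
      unfolding F1_def F2_def using sigma_add_mult_sigma_diff_aux[OF a elim(2)] by blast
  qed
  then have "(F2 \<longlongrightarrow> F1 b) (at b)"
    by (rule Lim_transform_eventually[OF F1])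
  then have "F1 b = F2 b"
    using F2 by (rule tendsto_unique[OF at_neq_bot])
  then show ?thesis
    by (simp add: F1_def F2_def)
qed

lemma zeta_add_minus_zeta_diff:
  assumes a: "a \<notin> \<Lambda>" and b: "b \<notin> \<Lambda>" and ab: "a + b \<notin> \<Lambda>" "a - b \<notin> \<Lambda>"
  shows "\<P> b \<noteq> \<P> a" and "\<zeta> (a + b) - \<zeta> (a - b) = 2 * \<zeta> b + wp' b / (\<P> b - \<P> a)"
proof -
  have nonzero: "\<sigma> a \<noteq> 0" "\<sigma> b \<noteq> 0" "\<sigma> (a + b) * \<sigma> (a - b) \<noteq> 0"
    using a b ab by (simp_all add: sigma_eq_0_iff)
  then show W: "\<P> b \<noteq> \<P> a"
    using sigma_add_mult_sigma_diff[OF a b] by auto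
  define U where "U = {x. x \<notin> \<Lambda> \<and> x + a \<notin> \<Lambda> \<and> x - a \<notin> \<Lambda>}"
  have "open U" "b \<in> U"
    using open_avoiding_lattice_shifts[of a] b ab lattice_uminus_iff[of "b - a"] by (auto simp: U_def add.commute)
  have "((\<lambda>x. \<sigma> (a + x) * \<sigma> (a - x)) has_field_derivative
          \<sigma> (a + b) * \<zeta> (a + b) * \<sigma> (a - b) - \<sigma> (a - b) * \<zeta> (a - b) * \<sigma> (a + b)) (at b)"
    using ab by (auto intro!: derivative_eq_intros DERIV_chain2[OF has_field_derivative_sigma])
  moreover have "((\<lambda>x. \<sigma> (a + x) * \<sigma> (a - x)) has_field_derivative
          \<sigma> a ^ 2 * (2 * \<sigma> b ^ 2 * \<zeta> b * (\<P> b - \<P> a) + \<sigma> b ^ 2 * wp' b)) (at b)"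
  proof (rule has_field_derivative_transform_within_open[OF _ \<open>open U\<close> \<open>b \<in> U\<close>])
    show "((\<lambda>x. \<sigma> a ^ 2 * \<sigma> x ^ 2 * (\<P> x - \<P> a)) has_field_derivative
          \<sigma> a ^ 2 * (2 * \<sigma> b ^ 2 * \<zeta> b * (\<P> b - \<P> a) + \<sigma> b ^ 2 * wp' b)) (at b)"
      using b by (auto intro!: derivative_eq_intros has_field_derivative_sigma has_field_derivative_wp
                       simp: algebra_simps power2_eq_square)
    show "\<sigma> a ^ 2 * \<sigma> x ^ 2 * (\<P> x - \<P> a) = \<sigma> (a + x) * \<sigma> (a - x)" if "x \<in> U" for x
      using that a sigma_add_mult_sigma_diff[OF a, of x] by (simp add: U_def)
  qed
  ultimately have "\<sigma> (a + b) * \<sigma> (a - b) * (\<zeta> (a + b) - \<zeta> (a - b))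
                     = \<sigma> a ^ 2 * \<sigma> b ^ 2 * (2 * \<zeta> b * (\<P> b - \<P> a) + wp' b)"
    by (auto dest: DERIV_unique simp: algebra_simps)
  then have "(\<P> b - \<P> a) * (\<zeta> (a + b) - \<zeta> (a - b)) = 2 * \<zeta> b * (\<P> b - \<P> a) + wp' b"
    using nonzero by (simp add: sigma_add_mult_sigma_diff[OF a b] mult.assoc)
  then show "\<zeta> (a + b) - \<zeta> (a - b) = 2 * \<zeta> b + wp' b / (\<P> b - \<P> a)"
    using W by (simp add: field_simps)
qed

lemma wp_diff_minus_wp_add:
  assumes a: "a \<notin> \<Lambda>" and b: "b \<notin> \<Lambda>" and ab: "a + b \<notin> \<Lambda>" "a - b \<notin> \<Lambda>"
  shows "\<P> (a - b) - \<P> (a + b) = wp' a * wp' b / (\<P> a - \<P> b) ^ 2"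
proof -
  define V where "V = {x. x \<notin> \<Lambda> \<and> x + b \<notin> \<Lambda> \<and> x - b \<notin> \<Lambda>}"
  have "open V" "a \<in> V"
    using open_avoiding_lattice_shifts[of b] a ab by (auto simp: V_def)
  have W: "\<P> b - \<P> a \<noteq> 0"
    using zeta_add_minus_zeta_diff(1)[OF a b ab] by simp
  have "((\<lambda>x. \<zeta> (x + b) - \<zeta> (x - b)) has_field_derivative - \<P> (a + b) + \<P> (a - b)) (at a)"
    using ab by (auto intro!: derivative_eq_intros DERIV_chain2[OF has_field_derivative_zeta])
  moreover have "((\<lambda>x. \<zeta> (x + b) - \<zeta> (x - b)) has_field_derivative
                   wp' b * wp' a / ((\<P> b - \<P> a) * (\<P> b - \<P> a))) (at a)"
  proof (rule has_field_derivative_transform_within_open[OF _ \<open>open V\<close> \<open>a \<in> V\<close>])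
    show "((\<lambda>x. 2 * \<zeta> b + wp' b / (\<P> b - \<P> x)) has_field_derivative
            wp' b * wp' a / ((\<P> b - \<P> a) * (\<P> b - \<P> a))) (at a)"
      using a W by (auto intro!: derivative_eq_intros has_field_derivative_wp simp: field_simps)
    show "2 * \<zeta> b + wp' b / (\<P> b - \<P> x) = \<zeta> (x + b) - \<zeta> (x - b)" if "x \<in> V" for x
      using that zeta_add_minus_zeta_diff(2)[OF _ b] by (simp add: V_def)
  qed
  ultimately show ?thesis
    by (auto dest: DERIV_unique simp: power2_eq_square algebra_simps)
qed

section \<open>The equivalence of the two lattice equations\<close>


definition Fsig_regular :: "complex \<Rightarrow> complex \<Rightarrow> complex \<Rightarrow> bool" where
  "Fsig_regular \<beta> X Y \<longleftrightarrow> X + Y + \<beta> \<notin> \<Lambda> \<and> X + Y - \<beta> \<notin> \<Lambda> \<and> X - Y + \<beta> \<notin> \<Lambda> \<and> X - Y - \<beta> \<notin> \<Lambda>"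

lemma Fsig_regular_commute: "Fsig_regular \<beta> X Y \<longleftrightarrow> Fsig_regular \<beta> Y X"
proof -
  have "X - Y + \<beta> \<in> \<Lambda> \<longleftrightarrow> Y - X - \<beta> \<in> \<Lambda>" "X - Y - \<beta> \<in> \<Lambda> \<longleftrightarrow> Y - X + \<beta> \<in> \<Lambda>"
    using lattice_uminus_iff[of "Y - X - \<beta>"] lattice_uminus_iff[of "Y - X + \<beta>"] by (simp_all add: algebra_simps)
  then show ?thesis
    unfolding Fsig_regular_def add.commute[of Y X] by blast
qed

lemma Fsig_eq:
  assumes "X + \<beta> \<notin> \<Lambda>" "X - \<beta> \<notin> \<Lambda>" "Y \<notin> \<Lambda>"
  shows "Fsig w1 w2 X Y \<beta> = \<sigma> (X + \<beta>) ^ 2 * (\<P> Y - \<P> (X + \<beta>)) / (\<sigma> (X - \<beta>) ^ 2 * (\<P> Y - \<P> (X - \<beta>)))"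
proof -
  have "\<sigma> (X + Y + \<beta>) * \<sigma> (X - Y + \<beta>) = \<sigma> Y ^ 2 * (\<sigma> (X + \<beta>) ^ 2 * (\<P> Y - \<P> (X + \<beta>)))"
    "\<sigma> (X + Y - \<beta>) * \<sigma> (X - Y - \<beta>) = \<sigma> Y ^ 2 * (\<sigma> (X - \<beta>) ^ 2 * (\<P> Y - \<P> (X - \<beta>)))"
    using sigma_add_mult_sigma_diff[OF assms(1,3)] sigma_add_mult_sigma_diff[OF assms(2,3)]
    by (simp_all add: algebra_simps)
  moreover have "\<sigma> Y ^ 2 \<noteq> 0"
    using assms(3) by (simp add: sigma_eq_0_iff)
  ultimately show ?thesis
    unfolding Fsig_def by simp
qed

lemma wp_neq_if_regular:
  assumes "X \<notin> \<Lambda>" "Y \<notin> \<Lambda>" "X + Y \<notin> \<Lambda>" "X - Y \<notin> \<Lambda>"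
  shows "\<P> Y \<noteq> \<P> X"
  using zeta_add_minus_zeta_diff(1)[OF assms] .

lemma Fsig_quotient_eq_iff:
  assumes X: "X \<notin> \<Lambda>" and Y: "Y \<notin> \<Lambda>" and Z: "Z \<notin> \<Lambda>"
    and \<beta>: "\<beta> \<notin> \<Lambda>" "deriv \<P> \<beta> \<noteq> 0" and X\<beta>: "X + \<beta> \<notin> \<Lambda>" "X - \<beta> \<notin> \<Lambda>"
    and XY: "Fsig_regular \<beta> X Y" and XZ: "Fsig_regular \<beta> X Z"
    and v: "v ^ 2 \<noteq> 1" and X': "deriv \<P> X \<noteq> 0" and YZ: "\<P> Y \<noteq> \<P> Z"
  shows "(v - 1) / (v + 1) = Fsig w1 w2 X Y \<beta> / Fsig w1 w2 X Z \<beta> \<longleftrightarrow>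
         deriv \<P> X * v = 2 * rho w1 w2 (\<P> Y) X (\<P> Z) \<beta> / (\<P> Y - \<P> Z)"
proof -
  define A where "A = \<P> (X + \<beta>)"
  define B where "B = \<P> (X - \<beta>)"
  have shift: "X + \<beta> + W = X + W + \<beta>" "X + \<beta> - W = X - W + \<beta>"
    "X - \<beta> + W = X + W - \<beta>" "X - \<beta> - W = X - W - \<beta>" for W
    by simp_all
  have neq: "\<P> Y \<noteq> A" "\<P> Y \<noteq> B" "\<P> Z \<noteq> A" "\<P> Z \<noteq> B"
    using wp_neq_if_regular[of "X + \<beta>" Y, unfolded shift] wp_neq_if_regular[of "X - \<beta>" Y, unfolded shift]
          wp_neq_if_regular[of "X + \<beta>" Z, unfolded shift] wp_neq_if_regular[of "X - \<beta>" Z, unfolded shift]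
          XY XZ X\<beta> Y Z
    unfolding A_def B_def Fsig_regular_def by auto
  have "\<sigma> (X + \<beta>) ^ 2 \<noteq> 0" "\<sigma> (X - \<beta>) ^ 2 \<noteq> 0"
    using X\<beta> by (simp_all add: sigma_eq_0_iff)
  moreover have "(s * a / (t * b)) / (s * c / (t * e)) = (a * e) / (b * c)"
    if "s \<noteq> 0" "t \<noteq> 0" "b \<noteq> 0" "c \<noteq> 0" "e \<noteq> 0" for s t a b c e :: complex
    using that by (simp add: field_simps)
  ultimately have "Fsig w1 w2 X Y \<beta> / Fsig w1 w2 X Z \<beta> = ((\<P> Y - A) * (\<P> Z - B)) / ((\<P> Y - B) * (\<P> Z - A))"
    using neq unfolding Fsig_eq[OF X\<beta> Y] Fsig_eq[OF X\<beta> Z] A_def[symmetric] B_def[symmetric] by simp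
  moreover have "rho w1 w2 (\<P> Y) X (\<P> Z) \<beta>
      = (\<P> X - \<P> \<beta>) ^ 2 / wp' \<beta> * (\<P> Y * \<P> Z - (A + B) * (\<P> Y + \<P> Z) / 2 + A * B)"
    by (simp add: rho_def deriv_wp[OF \<beta>(1)] A_def B_def)
  moreover have "\<P> X - \<P> \<beta> \<noteq> 0"
    using wp_neq_if_regular[OF X \<beta>(1) X\<beta>] by simp
  moreover have "B - A = wp' X * wp' \<beta> / (\<P> X - \<P> \<beta>) ^ 2"
    unfolding A_def B_def by (rule wp_diff_minus_wp_add[OF X \<beta>(1) X\<beta>])
  ultimately show ?thesis
    using cayley_ratio_eq_iff[OF v _ _ _ YZ neq(2,3)] X' \<beta>(2) by (simp add: deriv_wp[OF X] deriv_wp[OF \<beta>(1)])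
qed

lemma tdot_wp_comp:
  assumes "z differentiable at t" "z t \<notin> \<Lambda>"
  shows "tdot (\<lambda>s. \<P> (z s)) t = deriv \<P> (z t) * tdot z t"
proof -
  have "(z has_vector_derivative tdot z t) (at t)"
    using assms(1) by (simp add: tdot_def vector_derivative_works)
  from field_vector_diff_chain_at[OF this has_field_derivative_wp[OF assms(2)]]
  show ?thesis
    by (simp add: tdot_def o_def vector_derivative_at deriv_wp[OF assms(2)] mult.commute)
qed

end


theorem mainTheorem15:
  fixes w1 w2 \<beta> :: complex and x :: "int \<Rightarrow> real \<Rightarrow> complex" and T :: "real set"
  assumes periods: "Im (w2 / w1) \<noteq> 0"
    and T_open: "open T"
    and smooth: "\<forall>k. smooth_on T (x k)"
    and xdot: "\<forall>k. \<forall>t\<in>T. (tdot (x k) t)^2 \<noteq> 1"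
    and not_pole: "\<forall>k. \<forall>t\<in>T. x k t \<notin> lattice w1 w2"
    and wp'_nz: "\<forall>k. \<forall>t\<in>T. deriv (wp w1 w2) (x k t) \<noteq> 0"
    and generic: "generic_beta w1 w2 x T \<beta>"
    and u_distinct: "\<forall>k. \<forall>t\<in>T. wp w1 w2 (x (k + 1) t) \<noteq> wp w1 w2 (x (k - 1) t)"
  shows "(\<forall>k. \<forall>t\<in>T.
            (tdot (x k) t - 1) / (tdot (x k) t + 1)
              = Fsig w1 w2 (x k t) (x (k + 1) t) \<beta> / Fsig w1 w2 (x k t) (x (k - 1) t) \<beta>)
     \<longleftrightarrow>
         (\<forall>k. \<forall>t\<in>T.
            tdot (\<lambda>s. wp w1 w2 (x k s)) t
              = 2 * rho w1 w2 (wp w1 w2 (x (k + 1) t)) (x k t) (wp w1 w2 (x (k - 1) t)) \<beta>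
                / (wp w1 w2 (x (k + 1) t) - wp w1 w2 (x (k - 1) t)))"
proof -
  interpret period_lattice w1 w2
    using periods by unfold_locales
  have \<beta>: "\<beta> \<notin> \<Lambda>" "deriv \<P> \<beta> \<noteq> 0"
    and shifted: "\<And>k t. t \<in> T \<Longrightarrow> x k t + \<beta> \<notin> \<Lambda> \<and> x k t - \<beta> \<notin> \<Lambda>"
    and regular: "\<And>k t. t \<in> T \<Longrightarrow> Fsig_regular \<beta> (x k t) (x (k + 1) t)"
    using generic by (auto simp: generic_beta_def Fsig_regular_def)
  have "(tdot (x k) t - 1) / (tdot (x k) t + 1)
          = Fsig w1 w2 (x k t) (x (k + 1) t) \<beta> / Fsig w1 w2 (x k t) (x (k - 1) t) \<beta>
        \<longleftrightarrow> tdot (\<lambda>s. \<P> (x k s)) t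
          = 2 * rho w1 w2 (\<P> (x (k + 1) t)) (x k t) (\<P> (x (k - 1) t)) \<beta>
            / (\<P> (x (k + 1) t) - \<P> (x (k - 1) t))" if t: "t \<in> T" for k t
  proof -
    have "Fsig_regular \<beta> (x k t) (x (k - 1) t)"
      using regular[OF t, of "k - 1"] by (simp add: Fsig_regular_commute)
    moreover have "tdot (\<lambda>s. \<P> (x k s)) t = deriv \<P> (x k t) * tdot (x k) t"
      using smooth not_pole t by (intro tdot_wp_comp smooth_on_imp_differentiable) auto
    ultimately show ?thesis
      using Fsig_quotient_eq_iff[OF _ _ _ \<beta> _ _ regular[OF t]] shifted[OF t] not_pole xdot wp'_nz u_distinct t
      by simp
  qed
  then show ?thesis
    by blast
qed

end
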